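(* For $w \in Y_b$ and $\theta \in C_0^\infty(\mathbb{R})$, $\big\|\theta(t)\int_0^t S(t-t')w(\cdot,t')\,dt'\big\|_{X_b} \leq C\|w\|_{Y_b}$, with $C$ independent of $w$.
   Context: $S(t)$ is the group $e^{-t\partial_x^3}$, $S(t)\phi(x) = \int e^{i(x\xi+t\xi^3)}\hat\phi(\xi)d\xi$. With the Fourier inversion $w(x,t)=\iint e^{i(x\xi+t\lambda)}\hat w(\xi,\lambda)d\xi d\lambda$ (constants immaterial), the Duhamel term is $\int_0^t S(t-t')w(\cdot,t')dt' = \iint e^{ix\xi}\frac{e^{it\lambda}-e^{it\xi^3}}{i(\lambda-\xi^3)}\hat w(\xi,\lambda)d\xi d\lambda$. Fix $\frac12 < \alpha < \frac23$ and $0<b<\frac12$. For $F\in\mathcal{S}'(\mathbb{R}^2)$ with space-time Fourier transform $\hat F$: $\|F\|_{X_b} = \big(\iint(1+|\lambda-\xi^3|)^{2b}|\hat F|^2d\xi d\lambda\big)^{1/2} + \big(\iint_{|\xi|<1}(1+|\lambda|)^{2\alpha}|\hat F|^2d\xi d\lambda\big)^{1/2}$; $\|F\|_{Y_b} = \big(\iint\frac{|\hat F|^2}{(1+|\lambda-\xi^3|)^{2b}}d\xi d\lambda\big)^{1/2} + \big(\iint_{|\xi|<1}\frac{|\hat F|^2}{(1+|\lambda|)^{2(1-\alpha)}}d\xi d\lambda\big)^{1/2} + \big(\int\big(\int\frac{|\hat F(\xi,\lambda)|}{1+|\lambda-\xi^3|}d\lambda\big)^2 d\xi\big)^{1/2}$.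 $X_b$, $Y_b$ are the spaces where these norms are finite. *)

theory Defs
  imports "HOL-Analysis.Analysis"
begin

definition smooth_fun :: "(real \<Rightarrow> real) \<Rightarrow> bool" where
  "smooth_fun f \<longleftrightarrow> (\<forall>n x. ((deriv ^^ n) f) differentiable (at x))"

definition C0_infty :: "(real \<Rightarrow> real) \<Rightarrow> bool" where
  "C0_infty f \<longleftrightarrow> smooth_fun f \<and> bounded {t. f t \<noteq> 0}"

definition enn_sqrt :: "ennreal \<Rightarrow> ennreal" where
  "enn_sqrt I = (if I = \<infinity> then \<infinity> else ennreal (sqrt (enn2real I)))"

text \<open>Norms, expressed through the space-time Fourier transform Fh (xi, lambda)
  (first argument xi, second argument lambda).\<close>
definition Xb_norm :: "real \<Rightarrow> real \<Rightarrow> (real \<Rightarrow> real \<Rightarrow> complex) \<Rightarrow> ennreal" where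
  "Xb_norm \<alpha> b Fh =
     enn_sqrt (\<integral>\<^sup>+ \<xi>. \<integral>\<^sup>+ lam. ennreal ((1 + \<bar>lam - \<xi>^3\<bar>) powr (2*b) * (cmod (Fh \<xi> lam))\<^sup>2) \<partial>lborel \<partial>lborel)
   + enn_sqrt (\<integral>\<^sup>+ \<xi>. indicator {-1<..<1} \<xi> *
        (\<integral>\<^sup>+ lam. ennreal ((1 + \<bar>lam\<bar>) powr (2*\<alpha>) * (cmod (Fh \<xi> lam))\<^sup>2) \<partial>lborel) \<partial>lborel)"

definition Yb_norm :: "real \<Rightarrow> real \<Rightarrow> (real \<Rightarrow> real \<Rightarrow> complex) \<Rightarrow> ennreal" where
  "Yb_norm \<alpha> b Fh =
     enn_sqrt (\<integral>\<^sup>+ \<xi>. \<integral>\<^sup>+ lam. ennreal ((cmod (Fh \<xi> lam))\<^sup>2 / (1 + \<bar>lam - \<xi>^3\<bar>) powr (2*b)) \<partial>lborel \<partial>lborel)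
   + enn_sqrt (\<integral>\<^sup>+ \<xi>. indicator {-1<..<1} \<xi> *
        (\<integral>\<^sup>+ lam. ennreal ((cmod (Fh \<xi> lam))\<^sup>2 / (1 + \<bar>lam\<bar>) powr (2*(1-\<alpha>))) \<partial>lborel) \<partial>lborel)
   + enn_sqrt (\<integral>\<^sup>+ \<xi>. (\<integral>\<^sup>+ lam. ennreal (cmod (Fh \<xi> lam) / (1 + \<bar>lam - \<xi>^3\<bar>)) \<partial>lborel)\<^sup>2 \<partial>lborel)"

text \<open>Spatial Fourier transform (in x, at frequency xi) of the Duhamel term
  u(x,t) = int_0^t S(t-t') w(.,t') dt', written in terms of the space-time
  Fourier transform wh of w:  uh(xi,t) = int (e^{it lambda} - e^{it xi^3}) / (i(lambda - xi^3)) wh(xi,lambda) dlambda.\<close>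
definition duhamel_x_hat :: "(real \<Rightarrow> real \<Rightarrow> complex) \<Rightarrow> real \<Rightarrow> real \<Rightarrow> complex" where
  "duhamel_x_hat wh \<xi> t =
     (LINT lam|lborel. (exp (\<i> * complex_of_real (t*lam)) - exp (\<i> * complex_of_real (t*\<xi>^3)))
                      / (\<i> * complex_of_real (lam - \<xi>^3)) * wh \<xi> lam)"

text \<open>Space-time Fourier transform of theta(t) * (Duhamel term):
  Fourier transform in t of theta(t) uh(xi,t), with the normalisation matching
  the inversion formula w = \<integral>\<integral> e^{i(x xi + t lambda)} wh.\<close>
definition cutoff_duhamel_hat ::
  "(real \<Rightarrow> real) \<Rightarrow> (real \<Rightarrow> real \<Rightarrow> complex) \<Rightarrow> real \<Rightarrow> real \<Rightarrow> complex" where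
  "cutoff_duhamel_hat \<theta> wh \<xi> lam =
     (LINT t|lborel. exp (- \<i> * complex_of_real (t*lam)) * complex_of_real (\<theta> t) * duhamel_x_hat wh \<xi> t)
       / complex_of_real (2*pi)"

end

theory Submission
  imports Defs
begin

text \<open>
  Let u be the Duhamel term. The space-time Fourier transform of \<theta>(t) u at (\<xi>, \<mu>) is
  (2\<pi>)^-1 \<integral> K(\<mu>, \<lambda>, \<xi>^3) wh(\<xi>, \<lambda>) d\<lambda>, where K(\<mu>, \<lambda>, a) is the Fourier transform in t
  of \<theta>(t) (exp(it\<lambda>) - exp(ita)) / (i(\<lambda> - a)). Integrating by parts twice, done here through
  a second difference of step \<pi>/\<tau> at frequency \<tau>, gives
  |K| \<le> C (\<langle>\<mu> - \<lambda>\<rangle>^-2 + \<langle>\<mu> - a\<rangle>^-2) / \<langle>\<lambda> - a\<rangle>: for |\<lambda> - a| > 1 the two exponentials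
  are estimated separately, and for |\<lambda> - a| \<le> 1 the multiplier is exp(ita) times the smooth
  function of t given by the integral of exp(is(\<lambda> - a)) over s \<in> [0, t].
  So for fixed \<xi> the transform is dominated by a Lorentzian convolved with
  |wh(\<xi>, \<lambda>)| / \<langle>\<lambda> - \<xi>^3\<rangle>, plus a Lorentzian centred at \<xi>^3 times the L^1 norm of that
  function. Peetre's inequality moves the weights \<langle>\<mu> - \<xi>^3\<rangle>^b and, for |\<xi>| < 1, \<langle>\<mu>\<rangle>^\<alpha>
  through the convolution (this is where b \<le> 1/2 and \<alpha> < 1 are needed), and Young's inequality
  L^1 * L^2 \<subseteq> L^2 bounds each part of the X_b norm by parts of the Y_b norm.
\<close>

section \<open>Fourier decay of compactly supported \<open>C\<^sup>2\<close> functions\<close>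

definition fourier :: "(real \<Rightarrow> complex) \<Rightarrow> real \<Rightarrow> complex" where
  "fourier f \<tau> = (LINT t|lborel. exp (- \<i> * complex_of_real (t * \<tau>)) * f t)"

lemma norm_diff_le_of_vector_derivative_bound:
  fixes f f' :: "real \<Rightarrow> complex"
  assumes "\<And>t. (f has_vector_derivative f' t) (at t)" "\<And>t. norm (f' t) \<le> B"
  shows "norm (f x - f y) \<le> B * \<bar>x - y\<bar>"
proof -
  have "norm (f x - f y) \<le> B * norm (x - y)"
  proof (rule differentiable_bound[of UNIV f "\<lambda>t h. h *\<^sub>R f' t"])
    show "(f has_derivative (\<lambda>h. h *\<^sub>R f' t)) (at t within UNIV)" for t
      using assms(1)[of t] by (simp add: has_vector_derivative_def)
    show "onorm (\<lambda>h. h *\<^sub>R f' t) \<le> B" for t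
      using onorm_scaleR_left[OF bounded_linear_ident, of "f' t"] assms(2)[of t]
      by (simp add: onorm_id)
  qed auto
  then show ?thesis by simp
qed

lemma second_difference_le:
  fixes f f' f'' :: "real \<Rightarrow> complex"
  assumes f': "\<And>t. (f has_vector_derivative f' t) (at t)"
    and f'': "\<And>t. (f' has_vector_derivative f'' t) (at t)"
    and bound: "\<And>t. norm (f'' t) \<le> M"
  shows "norm (f t - 2 * f (t + h) + f (t + 2*h)) \<le> M * h\<^sup>2"
proof -
  define g where "g x = f (x + h) - f x" for x
  have "(g has_vector_derivative f' (x + h) - f' x) (at x)" for x
  proof -
    have "((\<lambda>x. x + h) has_vector_derivative 1) (at x)"
      by (auto intro!: derivative_eq_intros)
    from vector_diff_chain_at[OF this f'[of "x + h"]]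
    have "((\<lambda>x. f (x + h)) has_vector_derivative f' (x + h)) (at x)" by (simp add: o_def)
    then show ?thesis unfolding g_def by (intro has_vector_derivative_diff f')
  qed
  moreover have "norm (f' (x + h) - f' x) \<le> M * \<bar>h\<bar>" for x
    using norm_diff_le_of_vector_derivative_bound[OF f'' bound, of "x + h" x] by simp
  ultimately have "norm (g (t + h) - g t) \<le> (M * \<bar>h\<bar>) * \<bar>(t + h) - t\<bar>"
    by (rule norm_diff_le_of_vector_derivative_bound)
  then show ?thesis by (simp add: g_def algebra_simps power2_eq_square abs_mult_self_eq)
qed

lemma integrable_continuous_vanishing_outside:
  fixes f :: "real \<Rightarrow> 'a::{banach, second_countable_topology}"
  assumes "continuous_on UNIV f" "\<And>t. R < \<bar>t\<bar> \<Longrightarrow> f t = 0"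
  shows "integrable lborel f"
proof -
  have "integrable lborel (\<lambda>x. indicator {-R..R} x *\<^sub>R f x)"
    by (rule borel_integrable_compact) (auto intro: continuous_on_subset[OF assms(1)])
  moreover have "(\<lambda>x. indicator {-R..R} x *\<^sub>R f x) = f"
    using assms(2) by (auto simp: indicator_def fun_eq_iff abs_le_iff not_le)
  ultimately show ?thesis by simp
qed

text \<open>Unlike \<open>integral_norm_bound_ennreal\<close>, no integrability is needed: a
  non-integrable function has Bochner integral \<open>0\<close>.\<close>
lemma norm_integral_le_nn_integral_norm:
  fixes f :: "_ \<Rightarrow> 'a::{banach, second_countable_topology}"
  shows "ennreal (norm (integral\<^sup>L M f)) \<le> (\<integral>\<^sup>+x. ennreal (norm (f x)) \<partial>M)"
  by (cases "integrable M f") (simp_all add: integral_norm_bound_ennreal not_integrable_integral_eq)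

lemma norm_integral_le_of_vanishing_outside:
  fixes f :: "real \<Rightarrow> 'a::{banach, second_countable_topology}"
  assumes bound: "\<And>t. norm (f t) \<le> M" and vanish: "\<And>t. R < \<bar>t\<bar> \<Longrightarrow> f t = 0" and "0 \<le> R"
  shows "norm (integral\<^sup>L lborel f) \<le> 2 * R * M"
proof -
  have "0 \<le> M" using bound[of 0] norm_ge_zero order_trans by blast
  have "ennreal (norm (integral\<^sup>L lborel f)) \<le> (\<integral>\<^sup>+t. ennreal (norm (f t)) \<partial>lborel)"
    by (rule norm_integral_le_nn_integral_norm)
  also have "\<dots> \<le> (\<integral>\<^sup>+t. ennreal M * indicator {-R..R} t \<partial>lborel)"
    using bound vanish by (intro nn_integral_mono) (auto simp: indicator_def abs_le_iff not_le intro: ennreal_leI)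
  also have "\<dots> = ennreal (2 * R * M)"
    using \<open>0 \<le> R\<close> \<open>0 \<le> M\<close> by (simp add: nn_integral_cmult_indicator ennreal_mult' mult_ac)
  finally show ?thesis using \<open>0 \<le> R\<close> \<open>0 \<le> M\<close> by (simp add: ennreal_le_iff)
qed

lemma integrable_fourier_integrand:
  assumes "continuous_on UNIV f" "\<And>t. R < \<bar>t\<bar> \<Longrightarrow> f t = 0"
  shows "integrable lborel (\<lambda>t. exp (- \<i> * complex_of_real (t * \<tau>)) * f t)"
  using assms by (intro integrable_continuous_vanishing_outside[where R=R]) (auto intro!: continuous_intros)

lemma fourier_shift: "fourier (\<lambda>t. f (t + c)) \<tau> = exp (\<i> * complex_of_real (c * \<tau>)) * fourier f \<tau>"
proof -
  have "exp (- \<i> * complex_of_real (t * \<tau>))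
      = exp (\<i> * complex_of_real (c * \<tau>)) * exp (- \<i> * complex_of_real ((t + c) * \<tau>))" for t
    by (simp add: exp_add[symmetric] algebra_simps)
  then have "fourier (\<lambda>t. f (t + c)) \<tau>
      = (LINT t|lborel. exp (\<i> * complex_of_real (c * \<tau>)) * (exp (- \<i> * complex_of_real ((t + c) * \<tau>)) * f (t + c)))"
    unfolding fourier_def by (simp add: mult.assoc)
  also have "\<dots> = exp (\<i> * complex_of_real (c * \<tau>)) * fourier f \<tau>"
    using lborel_integral_real_affine[where c=1 and t=c and f="\<lambda>t. exp (- \<i> * complex_of_real (t * \<tau>)) * f t"]
    by (simp add: fourier_def add.commute)
  finally show ?thesis .
qed

text \<open>The shift by half a period \<open>pi/\<tau>\<close> flips the sign of the oscillating factor.\<close>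
lemma fourier_second_difference:
  assumes cont: "continuous_on UNIV f" and vanish: "\<And>t. R < \<bar>t\<bar> \<Longrightarrow> f t = 0" and "\<tau> \<noteq> 0"
  shows "fourier (\<lambda>t. f t - 2 * f (t + pi/\<tau>) + f (t + 2*pi/\<tau>)) \<tau> = 4 * fourier f \<tau>"
proof -
  have integrable: "integrable lborel (\<lambda>t. exp (- \<i> * complex_of_real (t * \<tau>)) * f (t + c))" for c
  proof (rule integrable_fourier_integrand[where R="R + \<bar>c\<bar>"])
    show "continuous_on UNIV (\<lambda>t. f (t + c))"
      by (rule continuous_on_compose2[OF cont]) (auto intro: continuous_intros)
  qed (use vanish in auto)
  have "fourier (\<lambda>t. f t - 2 * f (t + pi/\<tau>) + f (t + 2*pi/\<tau>)) \<tau>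
      = fourier f \<tau> - 2 * fourier (\<lambda>t. f (t + pi/\<tau>)) \<tau> + fourier (\<lambda>t. f (t + 2*pi/\<tau>)) \<tau>"
    using integrable[of 0] integrable[of "pi/\<tau>"] integrable[of "2*pi/\<tau>"]
    by (simp add: fourier_def algebra_simps)
  also have "\<dots> = 4 * fourier f \<tau>"
    using \<open>\<tau> \<noteq> 0\<close> by (simp add: fourier_shift mult.commute)
  finally show ?thesis .
qed

definition lorentzian :: "real \<Rightarrow> real" where
  "lorentzian x = 1 / (1 + x\<^sup>2)"

lemma lorentzian_pos: "0 < lorentzian x"
  unfolding lorentzian_def by (simp add: add_pos_nonneg)

lemma lorentzian_measurable [measurable]: "lorentzian \<in> borel_measurable borel"
  unfolding lorentzian_def by measurable

lemma norm_fourier_le_of_vanishing_outside: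
  assumes "\<And>t. norm (f t) \<le> M" "\<And>t. R < \<bar>t\<bar> \<Longrightarrow> f t = 0" "0 \<le> R"
  shows "norm (fourier f \<tau>) \<le> 2 * R * M"
  unfolding fourier_def using assms
  by (intro norm_integral_le_of_vanishing_outside) (auto simp: norm_mult norm_exp_i_times[of "- _", simplified])

lemma fourier_decay_high_frequency:
  fixes f f' f'' :: "real \<Rightarrow> complex"
  assumes f': "\<And>t. (f has_vector_derivative f' t) (at t)"
    and f'': "\<And>t. (f' has_vector_derivative f'' t) (at t)"
    and bound: "\<And>t. norm (f'' t) \<le> M"
    and vanish: "\<And>t. R < \<bar>t\<bar> \<Longrightarrow> f t = 0" and "0 \<le> R" and "pi < \<bar>\<tau>\<bar>"
  shows "norm (fourier f \<tau>) \<le> (R + 2) * M * pi\<^sup>2 * lorentzian \<tau>"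
proof -
  define h where "h = pi / \<tau>"
  have "0 \<le> M" using bound[of 0] norm_ge_zero order_trans by blast
  have "1 \<le> \<bar>\<tau>\<bar>" using \<open>pi < \<bar>\<tau>\<bar>\<close> pi_gt3 by linarith
  then have "1 \<le> \<tau>\<^sup>2" by (metis abs_ge_zero one_le_power power2_abs)
  have "\<bar>h\<bar> \<le> 1" using \<open>pi < \<bar>\<tau>\<bar>\<close> by (simp add: h_def abs_divide divide_le_eq)
  have cont: "continuous_on UNIV f"
    by (rule continuous_on_vector_derivative) (use f' in auto)
  have "4 * norm (fourier f \<tau>) = norm (fourier (\<lambda>t. f t - 2 * f (t + h) + f (t + 2*h)) \<tau>)"
    using fourier_second_difference[OF cont vanish, where \<tau>=\<tau>] \<open>1 \<le> \<bar>\<tau>\<bar>\<close>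
    by (simp add: h_def norm_mult)
  also have "\<dots> \<le> 2 * (R + 2) * (M * h\<^sup>2)"
  proof (rule norm_fourier_le_of_vanishing_outside)
    show "norm (f t - 2 * f (t + h) + f (t + 2*h)) \<le> M * h\<^sup>2" for t
      by (rule second_difference_le[OF f' f'' bound])
    show "f t - 2 * f (t + h) + f (t + 2*h) = 0" if "R + 2 < \<bar>t\<bar>" for t
      using that \<open>\<bar>h\<bar> \<le> 1\<close> vanish[of t] vanish[of "t + h"] vanish[of "t + 2*h"] by auto
  qed (use \<open>0 \<le> R\<close> in auto)
  finally have "norm (fourier f \<tau>) \<le> (R + 2) * M * h\<^sup>2 / 2"
    by (simp add: algebra_simps)
  also have "h\<^sup>2 \<le> pi\<^sup>2 * (2 * lorentzian \<tau>)"
  proof -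
    have "h\<^sup>2 = pi\<^sup>2 * (1 / \<tau>\<^sup>2)" by (simp add: h_def power_divide)
    also have "\<dots> \<le> pi\<^sup>2 * (2 * lorentzian \<tau>)"
      using \<open>1 \<le> \<tau>\<^sup>2\<close> by (intro mult_left_mono) (auto simp: lorentzian_def divide_simps)
    finally show ?thesis .
  qed
  finally show ?thesis using \<open>0 \<le> R\<close> \<open>0 \<le> M\<close> by (simp add: mult_left_mono divide_right_mono)
qed

lemma fourier_decay:
  fixes f f' f'' :: "real \<Rightarrow> complex"
  assumes f': "\<And>t. (f has_vector_derivative f' t) (at t)"
    and f'': "\<And>t. (f' has_vector_derivative f'' t) (at t)"
    and bound2: "\<And>t. norm (f'' t) \<le> M2" and bound0: "\<And>t. norm (f t) \<le> M0"
    and vanish: "\<And>t. R < \<bar>t\<bar> \<Longrightarrow> f t = 0" and "0 \<le> R"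
  shows "norm (fourier f \<tau>) \<le> (1 + pi\<^sup>2) * (2*R + 4) * (M0 + M2) * lorentzian \<tau>"
proof -
  have "0 \<le> M0" using bound0[of 0] norm_ge_zero order_trans by blast
  have "0 \<le> M2" using bound2[of 0] norm_ge_zero order_trans by blast
  show ?thesis
  proof (cases "\<bar>\<tau>\<bar> \<le> pi")
    case True
    have "\<tau>\<^sup>2 \<le> pi\<^sup>2" using power_mono[OF True abs_ge_zero, of 2] by simp
    then have "1 \<le> (1 + pi\<^sup>2) * lorentzian \<tau>" by (simp add: lorentzian_def add_pos_nonneg)
    have "norm (fourier f \<tau>) \<le> 2 * R * M0"
      by (rule norm_fourier_le_of_vanishing_outside[OF bound0 vanish \<open>0 \<le> R\<close>])
    also have "\<dots> \<le> (2*R + 4) * (M0 + M2) * 1"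
      using \<open>0 \<le> R\<close> \<open>0 \<le> M0\<close> \<open>0 \<le> M2\<close> by (simp add: mult_mono)
    also have "\<dots> \<le> (2*R + 4) * (M0 + M2) * ((1 + pi\<^sup>2) * lorentzian \<tau>)"
      using \<open>1 \<le> (1 + pi\<^sup>2) * lorentzian \<tau>\<close> \<open>0 \<le> R\<close> \<open>0 \<le> M0\<close> \<open>0 \<le> M2\<close> by (intro mult_left_mono) auto
    finally show ?thesis by (simp add: mult_ac)
  next
    case False
    have "norm (fourier f \<tau>) \<le> (R + 2) * M2 * pi\<^sup>2 * lorentzian \<tau>"
      using False by (intro fourier_decay_high_frequency[OF f' f'' bound2 vanish \<open>0 \<le> R\<close>]) auto
    also have "\<dots> \<le> (2*R + 4) * (M0 + M2) * (1 + pi\<^sup>2) * lorentzian \<tau>"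
      using \<open>0 \<le> R\<close> \<open>0 \<le> M0\<close> \<open>0 \<le> M2\<close> lorentzian_pos[of \<tau>]
      by (intro mult_right_mono mult_mono) auto
    finally show ?thesis by (simp add: mult_ac)
  qed
qed

section \<open>Smooth compactly supported cutoffs\<close>

lemma bounded_continuous_vanishing_outside:
  fixes g :: "real \<Rightarrow> 'a::real_normed_vector"
  assumes "continuous_on UNIV g" "\<And>t. R < \<bar>t\<bar> \<Longrightarrow> g t = 0"
  obtains B where "\<And>t. norm (g t) \<le> B"
proof -
  have "compact (g ` {-R..R})"
    by (rule compact_continuous_image) (auto intro: continuous_on_subset[OF assms(1)])
  then obtain B where B: "0 < B" "\<forall>x\<in>g ` {-R..R}. norm x \<le> B"
    using compact_imp_bounded bounded_pos by metis
  have "norm (g t) \<le> B" for t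
    using B assms(2)[of t] by (cases "\<bar>t\<bar> \<le> R") (auto simp: abs_le_iff)
  then show ?thesis by (rule that)
qed

lemma deriv_eq_0_outside:
  fixes g :: "real \<Rightarrow> real"
  assumes "\<And>t. R < \<bar>t\<bar> \<Longrightarrow> g t = 0" "R < \<bar>t\<bar>"
  shows "deriv g t = 0"
proof -
  have "(g has_real_derivative 0) (at t)"
    by (rule has_field_derivative_transform_within_open[where f="\<lambda>_. 0" and S="{t. R < \<bar>t\<bar>}"])
       (use assms in \<open>auto intro!: open_Collect_less continuous_intros\<close>)
  then show ?thesis by (rule DERIV_imp_deriv)
qed

lemma C0_infty_vanishing_outside:
  assumes "C0_infty \<theta>"
  obtains R where "0 < R" "\<And>t. R < \<bar>t\<bar> \<Longrightarrow> \<theta> t = 0"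
proof -
  obtain R where "0 < R" "\<forall>x\<in>{t. \<theta> t \<noteq> 0}. norm x \<le> R"
    using assms bounded_pos unfolding C0_infty_def by metis
  then show ?thesis using that[of R] by force
qed

lemma C0_infty_continuous: "C0_infty \<theta> \<Longrightarrow> continuous_on UNIV \<theta>"
  unfolding C0_infty_def smooth_fun_def
  by (metis funpow_0 differentiable_imp_continuous_within continuous_at_imp_continuous_on)

lemma C0_infty_C2_bounds:
  assumes "C0_infty \<theta>"
  obtains R B0 B1 B2 where "0 \<le> R"
    "\<And>t. ((\<lambda>t. complex_of_real (\<theta> t)) has_vector_derivative of_real (deriv \<theta> t)) (at t)"
    "\<And>t. ((\<lambda>t. complex_of_real (deriv \<theta> t)) has_vector_derivative of_real (deriv (deriv \<theta>) t)) (at t)"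
    "\<And>t. R < \<bar>t\<bar> \<Longrightarrow> \<theta> t = 0"
    "\<And>t. R < \<bar>t\<bar> \<Longrightarrow> deriv \<theta> t = 0"
    "\<And>t. R < \<bar>t\<bar> \<Longrightarrow> deriv (deriv \<theta>) t = 0"
    "\<And>t. \<bar>\<theta> t\<bar> \<le> B0" "\<And>t. \<bar>deriv \<theta> t\<bar> \<le> B1" "\<And>t. \<bar>deriv (deriv \<theta>) t\<bar> \<le> B2"
proof -
  have smooth: "\<And>n x. ((deriv ^^ n) \<theta>) differentiable (at x)"
    using assms unfolding C0_infty_def smooth_fun_def by auto
  have d0: "(\<theta> has_real_derivative deriv \<theta> t) (at t)" for t
    using smooth[of 0 t] by (simp add: DERIV_deriv_iff_real_differentiable)
  have d1: "(deriv \<theta> has_real_derivative deriv (deriv \<theta>) t) (at t)" for t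
    using smooth[of 1 t] by (simp add: DERIV_deriv_iff_real_differentiable)
  have c2: "continuous_on UNIV (deriv (deriv \<theta>))"
    using smooth[of 2] by (intro differentiable_imp_continuous_on)
      (auto simp: differentiable_on_def numeral_2_eq_2 intro: differentiable_at_withinI)
  have c1: "continuous_on UNIV (deriv \<theta>)"
    using d1 by (intro continuous_on_vector_derivative)
      (auto simp: has_real_derivative_iff_has_vector_derivative[symmetric] intro: has_field_derivative_at_within)
  have c0: "continuous_on UNIV \<theta>" by (rule C0_infty_continuous[OF assms])
  obtain R where R: "0 < R" and z0: "\<And>t. R < \<bar>t\<bar> \<Longrightarrow> \<theta> t = 0"
    using C0_infty_vanishing_outside[OF assms] by blast
  have z1: "deriv \<theta> t = 0" if "R < \<bar>t\<bar>" for t using deriv_eq_0_outside[OF z0 that] by auto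
  have z2: "deriv (deriv \<theta>) t = 0" if "R < \<bar>t\<bar>" for t using deriv_eq_0_outside[OF z1 that] by auto
  obtain B0 where "\<And>t. norm (\<theta> t) \<le> B0"
    using bounded_continuous_vanishing_outside[OF c0 z0] by blast
  moreover obtain B1 where "\<And>t. norm (deriv \<theta> t) \<le> B1"
    using bounded_continuous_vanishing_outside[OF c1 z1] by blast
  moreover obtain B2 where "\<And>t. norm (deriv (deriv \<theta>) t) \<le> B2"
    using bounded_continuous_vanishing_outside[OF c2 z2] by blast
  ultimately show ?thesis
    by (intro that[of R B0 B1 B2] has_vector_derivative_of_real d0 d1) (use R z0 z1 z2 in auto)
qed

section \<open>The time-localised Duhamel kernel\<close>

definition duhamel_multiplier :: "real \<Rightarrow> real \<Rightarrow> real \<Rightarrow> complex" where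
  "duhamel_multiplier a t lam =
     (exp (\<i> * complex_of_real (t * lam)) - exp (\<i> * complex_of_real (t * a))) / (\<i> * complex_of_real (lam - a))"

lemma duhamel_x_hat_eq: "duhamel_x_hat wh \<xi> t = (LINT lam|lborel. duhamel_multiplier (\<xi>^3) t lam * wh \<xi> lam)"
  unfolding duhamel_x_hat_def duhamel_multiplier_def by (simp add: mult_ac)

lemma has_vector_derivative_exp_i:
  "((\<lambda>t. exp (\<i> * complex_of_real (t * s))) has_vector_derivative \<i> * of_real s * exp (\<i> * complex_of_real (t * s))) (at t)"
proof -
  have "((\<lambda>z. exp (\<i> * (z * of_real s))) has_field_derivative
      exp (\<i> * (of_real t * of_real s)) * (\<i> * of_real s)) (at (of_real t))"
    by (auto intro!: derivative_eq_intros)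
  from has_vector_derivative_real_field[OF this, of UNIV] show ?thesis by (simp add: ac_simps)
qed

lemma norm_exp_i_minus_one_le: "norm (exp (\<i> * complex_of_real (t * s)) - 1) \<le> \<bar>s\<bar> * \<bar>t\<bar>"
proof -
  have "norm (exp (\<i> * complex_of_real (t * s)) - exp (\<i> * complex_of_real (0 * s))) \<le> \<bar>s\<bar> * \<bar>t - 0\<bar>"
    by (rule norm_diff_le_of_vector_derivative_bound[OF has_vector_derivative_exp_i]) (simp add: norm_mult)
  then show ?thesis by simp
qed

text \<open>For \<open>s \<noteq> 0\<close> this is \<open>\<integral>\<^sub>0\<^sup>t exp (i s u) du\<close>; for \<open>s = 0\<close> division by zero makes it \<open>0\<close>.\<close>
definition exp_i_primitive :: "real \<Rightarrow> real \<Rightarrow> complex" where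
  "exp_i_primitive s t = (exp (\<i> * complex_of_real (t * s)) - 1) / (\<i> * complex_of_real s)"

lemma has_vector_derivative_exp_i_primitive:
  assumes "s \<noteq> 0"
  shows "(exp_i_primitive s has_vector_derivative exp (\<i> * complex_of_real (t * s))) (at t)"
proof -
  have "(exp_i_primitive s has_vector_derivative
      (\<i> * of_real s * exp (\<i> * complex_of_real (t * s)) - 0) / (\<i> * complex_of_real s)) (at t)"
    unfolding exp_i_primitive_def [abs_def]
    by (intro has_vector_derivative_divide has_vector_derivative_diff has_vector_derivative_exp_i) auto
  then show ?thesis using assms by simp
qed

lemma norm_exp_i_primitive_le: "norm (exp_i_primitive s t) \<le> \<bar>t\<bar>"
proof (cases "s = 0")
  case False
  have "norm (exp_i_primitive s t) = norm (exp (\<i> * complex_of_real (t * s)) - 1) / \<bar>s\<bar>"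
    by (simp add: exp_i_primitive_def norm_divide norm_mult)
  also have "\<dots> \<le> \<bar>s\<bar> * \<bar>t\<bar> / \<bar>s\<bar>" by (intro divide_right_mono norm_exp_i_minus_one_le) auto
  finally show ?thesis using False by simp
qed (simp add: exp_i_primitive_def)

lemma norm_exp_i_primitive_le_inverse: "norm (exp_i_primitive s t) \<le> 2 / \<bar>s\<bar>"
proof -
  have "norm (exp (\<i> * complex_of_real (t * s)) - 1) \<le> 2"
    using norm_triangle_ineq4[of "exp (\<i> * complex_of_real (t * s))" 1] by simp
  then show ?thesis by (simp add: exp_i_primitive_def norm_divide norm_mult divide_right_mono)
qed

lemma duhamel_multiplier_eq:
  "duhamel_multiplier a t lam = exp (\<i> * complex_of_real (t * a)) * exp_i_primitive (lam - a) t"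
proof -
  have "exp (\<i> * complex_of_real (t * lam)) = exp (\<i> * complex_of_real (t * a)) * exp (\<i> * complex_of_real (t * (lam - a)))"
    by (simp add: exp_add[symmetric] algebra_simps)
  then show ?thesis by (simp add: duhamel_multiplier_def exp_i_primitive_def right_diff_distrib)
qed

lemma norm_duhamel_multiplier_le: "norm (duhamel_multiplier a t lam) \<le> (2*\<bar>t\<bar> + 4) / (1 + \<bar>lam - a\<bar>)"
proof -
  have "norm (duhamel_multiplier a t lam) = norm (exp_i_primitive (lam - a) t)"
    by (simp add: duhamel_multiplier_eq norm_mult)
  also have "\<dots> \<le> (2*\<bar>t\<bar> + 4) / (1 + \<bar>lam - a\<bar>)"
  proof (cases "\<bar>lam - a\<bar> \<le> 1")
    case True
    have "\<bar>t\<bar> * (1 + \<bar>lam - a\<bar>) \<le> \<bar>t\<bar> * 2" using True by (intro mult_left_mono) auto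
    then have "\<bar>t\<bar> \<le> (2*\<bar>t\<bar> + 4) / (1 + \<bar>lam - a\<bar>)" by (simp add: le_divide_eq add_pos_nonneg)
    with norm_exp_i_primitive_le show ?thesis by (rule order_trans)
  next
    case False
    then have "2 / \<bar>lam - a\<bar> \<le> 4 / (1 + \<bar>lam - a\<bar>)" by (simp add: divide_simps)
    also have "\<dots> \<le> (2*\<bar>t\<bar> + 4) / (1 + \<bar>lam - a\<bar>)" by (intro divide_right_mono) auto
    finally show ?thesis using norm_exp_i_primitive_le_inverse by (rule order_trans[rotated])
  qed
  finally show ?thesis .
qed

lemma fourier_modulation:
  "fourier (\<lambda>t. exp (\<i> * complex_of_real (t * c)) * f t) \<tau> = fourier f (\<tau> - c)"
proof -
  have "- \<i> * complex_of_real (t * (\<tau> - c)) = - \<i> * complex_of_real (t * \<tau>) + \<i> * complex_of_real (t * c)" for t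
    by (simp add: algebra_simps)
  then have "exp (- \<i> * complex_of_real (t * (\<tau> - c)))
      = exp (- \<i> * complex_of_real (t * \<tau>)) * exp (\<i> * complex_of_real (t * c))" for t
    by (simp only: exp_add)
  then show ?thesis unfolding fourier_def by (simp add: mult.assoc)
qed

lemma fourier_exp_i_primitive_decay:
  fixes g g' g'' :: "real \<Rightarrow> complex"
  assumes g': "\<And>t. (g has_vector_derivative g' t) (at t)"
    and g'': "\<And>t. (g' has_vector_derivative g'' t) (at t)"
    and bounds: "\<And>t. norm (g t) \<le> B0" "\<And>t. norm (g' t) \<le> B1" "\<And>t. norm (g'' t) \<le> B2"
    and vanish: "\<And>t. R < \<bar>t\<bar> \<Longrightarrow> g t = 0 \<and> g' t = 0 \<and> g'' t = 0" and "0 \<le> R" and "\<bar>s\<bar> \<le> 1"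
  shows "norm (fourier (\<lambda>t. g t * exp_i_primitive s t) \<tau>)
    \<le> (1 + pi\<^sup>2) * (2*R + 4) * (B0 * R + (B0 + 2*B1 + B2*R)) * lorentzian \<tau>"
proof (cases "s = 0")
  case True
  have "0 \<le> B0" "0 \<le> B1" "0 \<le> B2"
    using bounds[of 0] norm_ge_zero order_trans by blast+
  then show ?thesis
    using True \<open>0 \<le> R\<close> lorentzian_pos[of \<tau>] by (simp add: exp_i_primitive_def fourier_def)
next
  case False
  define E where "E t = exp (\<i> * complex_of_real (t * s))" for t
  define m where "m = exp_i_primitive s"
  have "0 \<le> B0" "0 \<le> B1" "0 \<le> B2"
    using bounds[of 0] norm_ge_zero order_trans by blast+
  have E': "(E has_vector_derivative \<i> * of_real s * E t) (at t)" for t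
    unfolding E_def by (rule has_vector_derivative_exp_i)
  have m': "(m has_vector_derivative E t) (at t)" for t
    unfolding m_def E_def by (rule has_vector_derivative_exp_i_primitive[OF False])
  have norm_E: "norm (E t) = 1" for t unfolding E_def by simp
  have norm_m: "norm (m t) \<le> \<bar>t\<bar>" for t unfolding m_def by (rule norm_exp_i_primitive_le)
  define f' where "f' t = g t * E t + g' t * m t" for t
  define f'' where "f'' t = g t * (\<i> * of_real s * E t) + g' t * E t + (g' t * E t + g'' t * m t)" for t
  have "((\<lambda>t. g t * m t) has_vector_derivative f' t) (at t)" for t
    unfolding f'_def by (rule has_vector_derivative_mult[OF g' m'])
  moreover have "(f' has_vector_derivative f'' t) (at t)" for t
    unfolding f'_def f''_def by (intro has_vector_derivative_add has_vector_derivative_mult g' g'' E' m')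
  moreover have "norm (f'' t) \<le> B0 + 2*B1 + B2*R" for t
  proof (cases "\<bar>t\<bar> \<le> R")
    case True
    have "norm (f'' t) \<le> norm (g t) * \<bar>s\<bar> + norm (g' t) + (norm (g' t) + norm (g'' t) * norm (m t))"
      unfolding f''_def
      by (intro order_trans[OF norm_triangle_ineq] add_mono order_refl norm_triangle_ineq)
         (simp_all add: norm_mult norm_E)
    also have "\<dots> \<le> B0 * 1 + B1 + (B1 + B2 * R)"
      using bounds[of t] norm_m[of t] True \<open>\<bar>s\<bar> \<le> 1\<close> \<open>0 \<le> B0\<close> \<open>0 \<le> B2\<close>
      by (intro add_mono mult_mono) auto
    finally show ?thesis by simp
  next
    case False
    then show ?thesis using vanish[of t] \<open>0 \<le> B0\<close> \<open>0 \<le> B1\<close> \<open>0 \<le> B2\<close> \<open>0 \<le> R\<close> by (simp add: f''_def)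
  qed
  moreover have "norm (g t * m t) \<le> B0 * R" for t
  proof (cases "\<bar>t\<bar> \<le> R")
    case True then show ?thesis
      unfolding norm_mult using bounds(1)[of t] norm_m[of t] \<open>0 \<le> B0\<close> by (intro mult_mono) auto
  next
    case False then show ?thesis using vanish[of t] \<open>0 \<le> B0\<close> \<open>0 \<le> R\<close> by simp
  qed
  ultimately show ?thesis
    unfolding m_def[symmetric] by (rule fourier_decay) (use vanish \<open>0 \<le> R\<close> in auto)
qed

lemma C0_infty_fourier_decay:
  assumes "C0_infty \<theta>"
  obtains K where "0 \<le> K"
    "\<And>\<tau>. norm (fourier (\<lambda>t. complex_of_real (\<theta> t)) \<tau>) \<le> K * lorentzian \<tau>"
    "\<And>s \<tau>. \<bar>s\<bar> \<le> 1 \<Longrightarrow> norm (fourier (\<lambda>t. complex_of_real (\<theta> t) * exp_i_primitive s t) \<tau>) \<le> K * lorentzian \<tau>"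
proof -
  obtain R B0 B1 B2 where "0 \<le> R"
    and d0: "\<And>t. ((\<lambda>t. complex_of_real (\<theta> t)) has_vector_derivative of_real (deriv \<theta> t)) (at t)"
    and d1: "\<And>t. ((\<lambda>t. complex_of_real (deriv \<theta> t)) has_vector_derivative of_real (deriv (deriv \<theta>) t)) (at t)"
    and z0: "\<And>t. R < \<bar>t\<bar> \<Longrightarrow> \<theta> t = 0"
    and z1: "\<And>t. R < \<bar>t\<bar> \<Longrightarrow> deriv \<theta> t = 0"
    and z2: "\<And>t. R < \<bar>t\<bar> \<Longrightarrow> deriv (deriv \<theta>) t = 0"
    and b0: "\<And>t. \<bar>\<theta> t\<bar> \<le> B0" and b1: "\<And>t. \<bar>deriv \<theta> t\<bar> \<le> B1" and b2: "\<And>t. \<bar>deriv (deriv \<theta>) t\<bar> \<le> B2"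
    using C0_infty_C2_bounds[OF assms] by blast
  have "0 \<le> B0" "0 \<le> B1" "0 \<le> B2" using b0[of 0] b1[of 0] b2[of 0] by linarith+
  define K where "K = (1 + pi\<^sup>2) * (2*R + 4) * (B0 * R + (B0 + 2*B1 + B2*R) + B2)"
  have K_ge: "(1 + pi\<^sup>2) * (2*R + 4) * B * lorentzian \<tau> \<le> K * lorentzian \<tau>"
    if "B \<le> B0 * R + (B0 + 2*B1 + B2*R) + B2" for B \<tau>
    unfolding K_def using that \<open>0 \<le> R\<close> lorentzian_pos[of \<tau>] by (intro mult_right_mono mult_left_mono) auto
  show ?thesis
  proof (rule that[of K])
    show "0 \<le> K" unfolding K_def using \<open>0 \<le> R\<close> \<open>0 \<le> B0\<close> \<open>0 \<le> B1\<close> \<open>0 \<le> B2\<close> by simp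
    have decay: "norm (fourier (\<lambda>t. complex_of_real (\<theta> t)) \<tau>) \<le> (1 + pi\<^sup>2) * (2*R + 4) * (B0 + B2) * lorentzian \<tau>" for \<tau>
      by (rule fourier_decay[OF d0 d1 _ _ _ \<open>0 \<le> R\<close>]) (use b0 b2 z0 in auto)
    show "norm (fourier (\<lambda>t. complex_of_real (\<theta> t)) \<tau>) \<le> K * lorentzian \<tau>" for \<tau>
      by (rule order_trans[OF decay K_ge]) (use \<open>0 \<le> R\<close> \<open>0 \<le> B0\<close> \<open>0 \<le> B1\<close> \<open>0 \<le> B2\<close> in simp)
    have primitive_decay: "norm (fourier (\<lambda>t. complex_of_real (\<theta> t) * exp_i_primitive s t) \<tau>)
        \<le> (1 + pi\<^sup>2) * (2*R + 4) * (B0 * R + (B0 + 2*B1 + B2*R)) * lorentzian \<tau>" if "\<bar>s\<bar> \<le> 1" for s \<tau>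
      by (rule fourier_exp_i_primitive_decay[OF d0 d1 _ _ _ _ \<open>0 \<le> R\<close> that]) (use b0 b1 b2 z0 z1 z2 in auto)
    show "norm (fourier (\<lambda>t. complex_of_real (\<theta> t) * exp_i_primitive s t) \<tau>) \<le> K * lorentzian \<tau>"
      if "\<bar>s\<bar> \<le> 1" for s \<tau>
      by (rule order_trans[OF primitive_decay[OF that] K_ge]) (use \<open>0 \<le> B2\<close> in simp)
  qed
qed

lemma fourier_duhamel_multiplier_eq:
  assumes "continuous_on UNIV g" "\<And>t. R < \<bar>t\<bar> \<Longrightarrow> g t = 0"
  shows "fourier (\<lambda>t. g t * duhamel_multiplier a t lam) \<mu>
    = (fourier g (\<mu> - lam) - fourier g (\<mu> - a)) / (\<i> * complex_of_real (lam - a))"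
proof -
  have integrable:
    "integrable lborel (\<lambda>t. exp (- \<i> * complex_of_real (t * \<mu>)) * (exp (\<i> * complex_of_real (t * c)) * g t))" for c
    by (rule integrable_fourier_integrand[where R=R]) (use assms in \<open>auto intro!: continuous_intros\<close>)
  have "g t * duhamel_multiplier a t lam
      = (exp (\<i> * complex_of_real (t * lam)) * g t - exp (\<i> * complex_of_real (t * a)) * g t)
        / (\<i> * complex_of_real (lam - a))" for t
    by (simp add: duhamel_multiplier_def diff_divide_distrib algebra_simps)
  then have "fourier (\<lambda>t. g t * duhamel_multiplier a t lam) \<mu>
      = (fourier (\<lambda>t. exp (\<i> * complex_of_real (t * lam)) * g t) \<mu>
         - fourier (\<lambda>t. exp (\<i> * complex_of_real (t * a)) * g t) \<mu>) / (\<i> * complex_of_real (lam - a))"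
    unfolding fourier_def using integrable[of lam] integrable[of a] by (simp add: right_diff_distrib)
  then show ?thesis by (simp only: fourier_modulation)
qed

lemma cutoff_kernel_bound:
  assumes "C0_infty \<theta>"
  obtains K where "0 \<le> K"
    "\<And>\<mu> lam a. norm (fourier (\<lambda>t. complex_of_real (\<theta> t) * duhamel_multiplier a t lam) \<mu>)
        \<le> K * (lorentzian (\<mu> - lam) + lorentzian (\<mu> - a)) / (1 + \<bar>lam - a\<bar>)"
proof -
  obtain K where "0 \<le> K" and decay: "\<And>\<tau>. norm (fourier (\<lambda>t. complex_of_real (\<theta> t)) \<tau>) \<le> K * lorentzian \<tau>"
    and primitive_decay: "\<And>s \<tau>. \<bar>s\<bar> \<le> 1 \<Longrightarrow>
      norm (fourier (\<lambda>t. complex_of_real (\<theta> t) * exp_i_primitive s t) \<tau>) \<le> K * lorentzian \<tau>"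
    using C0_infty_fourier_decay[OF assms] by blast
  obtain R where vanish: "\<And>t. R < \<bar>t\<bar> \<Longrightarrow> complex_of_real (\<theta> t) = 0"
    using C0_infty_vanishing_outside[OF assms] by auto
  have "continuous_on UNIV (\<lambda>t. complex_of_real (\<theta> t))"
    using C0_infty_continuous[OF assms] by (auto intro: continuous_intros)
  note multiplier_eq = fourier_duhamel_multiplier_eq[OF this vanish]
  show ?thesis
  proof (rule that[of "2 * K"])
    fix \<mu> lam a :: real
    define G where "G = lorentzian (\<mu> - lam) + lorentzian (\<mu> - a)"
    have "0 < G" unfolding G_def using lorentzian_pos by (simp add: add_pos_pos)
    have "norm (fourier (\<lambda>t. complex_of_real (\<theta> t) * duhamel_multiplier a t lam) \<mu>) \<le> K * G * (2 / (1 + \<bar>lam - a\<bar>))"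
    proof (cases "\<bar>lam - a\<bar> \<le> 1")
      case True
      have "fourier (\<lambda>t. complex_of_real (\<theta> t) * duhamel_multiplier a t lam) \<mu>
          = fourier (\<lambda>t. complex_of_real (\<theta> t) * exp_i_primitive (lam - a) t) (\<mu> - a)"
        by (simp add: duhamel_multiplier_eq fourier_modulation[symmetric] mult_ac)
      also have "norm \<dots> \<le> K * lorentzian (\<mu> - a)" by (rule primitive_decay[OF True])
      also have "\<dots> \<le> K * G * 1"
        using \<open>0 \<le> K\<close> lorentzian_pos[of "\<mu> - lam"] by (simp add: G_def mult_left_mono)
      also have "\<dots> \<le> K * G * (2 / (1 + \<bar>lam - a\<bar>))"
        using True \<open>0 \<le> K\<close> \<open>0 < G\<close> by (intro mult_left_mono) (auto simp: divide_simps)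
      finally show ?thesis .
    next
      case False
      have "norm (fourier (\<lambda>t. complex_of_real (\<theta> t)) (\<mu> - lam) - fourier (\<lambda>t. complex_of_real (\<theta> t)) (\<mu> - a))
          \<le> K * G"
        unfolding G_def distrib_left by (rule order_trans[OF norm_triangle_ineq4 add_mono[OF decay decay]])
      then have "norm (fourier (\<lambda>t. complex_of_real (\<theta> t) * duhamel_multiplier a t lam) \<mu>) \<le> K * G * (1 / \<bar>lam - a\<bar>)"
        by (simp add: multiplier_eq norm_divide norm_mult divide_right_mono flip: of_real_diff)
      also have "\<dots> \<le> K * G * (2 / (1 + \<bar>lam - a\<bar>))"
        using False \<open>0 \<le> K\<close> \<open>0 < G\<close> by (intro mult_left_mono) (auto simp: divide_simps)
      finally show ?thesis .
    qed
    then show "norm (fourier (\<lambda>t. complex_of_real (\<theta> t) * duhamel_multiplier a t lam) \<mu>)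
        \<le> 2 * K * (lorentzian (\<mu> - lam) + lorentzian (\<mu> - a)) / (1 + \<bar>lam - a\<bar>)"
      by (simp add: G_def mult_ac)
  qed (use \<open>0 \<le> K\<close> in simp)
qed

lemma integrable_duhamel_integrand:
  fixes \<theta> :: "real \<Rightarrow> real" and w :: "real \<Rightarrow> complex"
  assumes cont: "continuous_on UNIV \<theta>" and vanish: "\<And>t. R < \<bar>t\<bar> \<Longrightarrow> \<theta> t = 0"
    and w[measurable]: "w \<in> borel_measurable borel"
    and finite: "(\<integral>\<^sup>+lam. ennreal (cmod (w lam) / (1 + \<bar>lam - a\<bar>)) \<partial>lborel) < \<infinity>"
  shows "integrable (lborel \<Otimes>\<^sub>M lborel) (\<lambda>(t, lam).
    exp (- \<i> * complex_of_real (t * \<mu>)) * (complex_of_real (\<theta> t) * (duhamel_multiplier a t lam * w lam)))"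
    (is "integrable _ (case_prod ?F)")
proof (rule integrableI_bounded)
  have [measurable]: "\<theta> \<in> borel_measurable borel" by (rule borel_measurable_continuous_onI[OF cont])
  show "case_prod ?F \<in> borel_measurable (lborel \<Otimes>\<^sub>M lborel)"
    unfolding duhamel_multiplier_def by measurable
  define T where "T t = \<bar>\<theta> t\<bar> * (2*\<bar>t\<bar> + 4)" for t
  have "integrable lborel T"
    unfolding T_def using vanish
    by (intro integrable_continuous_vanishing_outside[where R=R]) (auto intro!: continuous_intros cont)
  then have T_finite: "(\<integral>\<^sup>+t. ennreal (T t) \<partial>lborel) < \<infinity>"
    by (subst nn_integral_eq_integral) (auto simp: T_def)
  have "(\<integral>\<^sup>+p. ennreal (norm (case_prod ?F p)) \<partial>(lborel \<Otimes>\<^sub>M lborel))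
      = (\<integral>\<^sup>+t. \<integral>\<^sup>+lam. ennreal (norm (?F t lam)) \<partial>lborel \<partial>lborel)"
    by (subst lborel.nn_integral_fst[symmetric]) (auto simp: duhamel_multiplier_def)
  also have "\<dots> \<le> (\<integral>\<^sup>+t. \<integral>\<^sup>+lam. ennreal (T t) * ennreal (cmod (w lam) / (1 + \<bar>lam - a\<bar>)) \<partial>lborel \<partial>lborel)"
  proof (intro nn_integral_mono)
    fix t lam
    have "norm (?F t lam) = \<bar>\<theta> t\<bar> * (norm (duhamel_multiplier a t lam) * cmod (w lam))"
      by (simp add: norm_mult)
    also have "\<dots> \<le> \<bar>\<theta> t\<bar> * ((2*\<bar>t\<bar> + 4) / (1 + \<bar>lam - a\<bar>) * cmod (w lam))"
      by (intro mult_left_mono mult_right_mono norm_duhamel_multiplier_le) auto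
    also have "\<dots> = T t * (cmod (w lam) / (1 + \<bar>lam - a\<bar>))" by (simp add: T_def)
    finally show "ennreal (norm (?F t lam)) \<le> ennreal (T t) * ennreal (cmod (w lam) / (1 + \<bar>lam - a\<bar>))"
      by (simp add: ennreal_mult[symmetric] T_def ennreal_leI)
  qed
  also have "\<dots> = (\<integral>\<^sup>+t. ennreal (T t) \<partial>lborel) * (\<integral>\<^sup>+lam. ennreal (cmod (w lam) / (1 + \<bar>lam - a\<bar>)) \<partial>lborel)"
    by (simp add: nn_integral_cmult nn_integral_multc T_def)
  also have "\<dots> < \<infinity>" using T_finite finite by (simp add: ennreal_mult_less_top)
  finally show "(\<integral>\<^sup>+p. ennreal (norm (case_prod ?F p)) \<partial>(lborel \<Otimes>\<^sub>M lborel)) < \<infinity>" .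
qed

definition duhamel_majorant :: "real \<Rightarrow> (real \<Rightarrow> real) \<Rightarrow> real \<Rightarrow> ennreal" where
  "duhamel_majorant a W \<mu> =
     (\<integral>\<^sup>+l. ennreal (lorentzian (\<mu> - l) * (W l / (1 + \<bar>l - a\<bar>))) \<partial>lborel)
     + ennreal (lorentzian (\<mu> - a)) * (\<integral>\<^sup>+l. ennreal (W l / (1 + \<bar>l - a\<bar>)) \<partial>lborel)"

lemma fourier_cutoff_duhamel_eq:
  fixes \<theta> :: "real \<Rightarrow> real" and w :: "real \<Rightarrow> complex"
  assumes "continuous_on UNIV \<theta>" "\<And>t. R < \<bar>t\<bar> \<Longrightarrow> \<theta> t = 0"
    and "w \<in> borel_measurable borel"
    and "(\<integral>\<^sup>+lam. ennreal (cmod (w lam) / (1 + \<bar>lam - a\<bar>)) \<partial>lborel) < \<infinity>"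
  shows "fourier (\<lambda>t. complex_of_real (\<theta> t) * (LINT lam|lborel. duhamel_multiplier a t lam * w lam)) \<mu>
    = (LINT lam|lborel. fourier (\<lambda>t. complex_of_real (\<theta> t) * duhamel_multiplier a t lam) \<mu> * w lam)"
proof -
  define e where "e t = exp (- \<i> * complex_of_real (t * \<mu>)) * complex_of_real (\<theta> t)" for t
  define k where "k t lam = duhamel_multiplier a t lam" for t lam
  have "fourier (\<lambda>t. complex_of_real (\<theta> t) * (LINT lam|lborel. duhamel_multiplier a t lam * w lam)) \<mu>
      = (LINT t|lborel. e t * (LINT lam|lborel. k t lam * w lam))"
    unfolding fourier_def e_def k_def by (simp add: mult.assoc)
  also have "\<dots> = (LINT t|lborel. LINT lam|lborel. e t * (k t lam * w lam))"
    by (simp add: integral_mult_right_zero)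
  also have "\<dots> = (LINT lam|lborel. LINT t|lborel. e t * (k t lam * w lam))"
    using lborel_pair.Fubini_integral[OF integrable_duhamel_integrand[OF assms]]
    by (simp add: e_def k_def mult.assoc)
  also have "\<dots> = (LINT lam|lborel. (LINT t|lborel. e t * k t lam) * w lam)"
    by (simp add: integral_mult_left_zero[symmetric] mult.assoc)
  also have "(\<lambda>lam. (LINT t|lborel. e t * k t lam) * w lam)
      = (\<lambda>lam. fourier (\<lambda>t. complex_of_real (\<theta> t) * duhamel_multiplier a t lam) \<mu> * w lam)"
    unfolding fourier_def e_def k_def by (simp add: mult.assoc)
  finally show ?thesis .
qed

lemma norm_fourier_cutoff_duhamel_le_majorant:
  fixes \<theta> :: "real \<Rightarrow> real" and w :: "real \<Rightarrow> complex"
  assumes "C0_infty \<theta>" and "0 \<le> K"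
    and kernel: "\<And>\<mu> lam. norm (fourier (\<lambda>t. complex_of_real (\<theta> t) * duhamel_multiplier a t lam) \<mu>)
        \<le> K * (lorentzian (\<mu> - lam) + lorentzian (\<mu> - a)) / (1 + \<bar>lam - a\<bar>)"
    and w[measurable]: "w \<in> borel_measurable borel"
    and finite: "(\<integral>\<^sup>+lam. ennreal (cmod (w lam) / (1 + \<bar>lam - a\<bar>)) \<partial>lborel) < \<infinity>"
  shows "ennreal (norm (fourier (\<lambda>t. complex_of_real (\<theta> t) * (LINT lam|lborel. duhamel_multiplier a t lam * w lam)) \<mu>))
    \<le> ennreal K * duhamel_majorant a (\<lambda>l. cmod (w l)) \<mu>"
proof -
  obtain R where vanish: "\<And>t. R < \<bar>t\<bar> \<Longrightarrow> \<theta> t = 0"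
    using C0_infty_vanishing_outside[OF \<open>C0_infty \<theta>\<close>] by blast
  have Fubini: "fourier (\<lambda>t. complex_of_real (\<theta> t) * (LINT lam|lborel. duhamel_multiplier a t lam * w lam)) \<mu>
      = (LINT lam|lborel. fourier (\<lambda>t. complex_of_real (\<theta> t) * duhamel_multiplier a t lam) \<mu> * w lam)"
    by (rule fourier_cutoff_duhamel_eq[OF C0_infty_continuous[OF \<open>C0_infty \<theta>\<close>] vanish w finite])
  define W where "W lam = cmod (w lam) / (1 + \<bar>lam - a\<bar>)" for lam
  have "ennreal (norm (fourier (\<lambda>t. complex_of_real (\<theta> t) * (LINT lam|lborel. duhamel_multiplier a t lam * w lam)) \<mu>))
      \<le> (\<integral>\<^sup>+lam. ennreal (norm (fourier (\<lambda>t. complex_of_real (\<theta> t) * duhamel_multiplier a t lam) \<mu> * w lam)) \<partial>lborel)"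
    unfolding Fubini by (rule norm_integral_le_nn_integral_norm)
  also have "\<dots> \<le> (\<integral>\<^sup>+lam. ennreal K *
      (ennreal (lorentzian (\<mu> - lam) * W lam) + ennreal (lorentzian (\<mu> - a)) * ennreal (W lam)) \<partial>lborel)"
  proof (intro nn_integral_mono)
    fix lam
    have "norm (fourier (\<lambda>t. complex_of_real (\<theta> t) * duhamel_multiplier a t lam) \<mu> * w lam)
        \<le> K * (lorentzian (\<mu> - lam) + lorentzian (\<mu> - a)) / (1 + \<bar>lam - a\<bar>) * cmod (w lam)"
      unfolding norm_mult by (intro mult_right_mono kernel) auto
    also have "\<dots> = K * (lorentzian (\<mu> - lam) * W lam + lorentzian (\<mu> - a) * W lam)"
      by (simp add: W_def algebra_simps add_divide_distrib)
    finally show "ennreal (norm (fourier (\<lambda>t. complex_of_real (\<theta> t) * duhamel_multiplier a t lam) \<mu> * w lam))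
        \<le> ennreal K * (ennreal (lorentzian (\<mu> - lam) * W lam) + ennreal (lorentzian (\<mu> - a)) * ennreal (W lam))"
      using \<open>0 \<le> K\<close> lorentzian_pos[of "\<mu> - lam"] lorentzian_pos[of "\<mu> - a"]
      by (simp add: W_def ennreal_mult[symmetric] ennreal_plus[symmetric] ennreal_leI less_imp_le del: ennreal_plus)
  qed
  also have "\<dots> = ennreal K * duhamel_majorant a (\<lambda>l. cmod (w l)) \<mu>"
    unfolding duhamel_majorant_def W_def by (simp add: nn_integral_cmult nn_integral_add)
  finally show ?thesis .
qed

definition modulation_L1 :: "(real \<Rightarrow> real \<Rightarrow> complex) \<Rightarrow> real \<Rightarrow> ennreal" where
  "modulation_L1 wh \<xi> = (\<integral>\<^sup>+lam. ennreal (cmod (wh \<xi> lam) / (1 + \<bar>lam - \<xi>^3\<bar>)) \<partial>lborel)"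

lemma cutoff_duhamel_hat_le_majorant:
  assumes "C0_infty \<theta>"
  obtains c where "0 \<le> c"
    "\<And>wh \<xi> \<mu>. wh \<xi> \<in> borel_measurable borel \<Longrightarrow> modulation_L1 wh \<xi> < \<infinity> \<Longrightarrow>
       ennreal (cmod (cutoff_duhamel_hat \<theta> wh \<xi> \<mu>)) \<le> ennreal c * duhamel_majorant (\<xi>^3) (\<lambda>l. cmod (wh \<xi> l)) \<mu>"
proof -
  obtain K where "0 \<le> K" and kernel: "\<And>\<mu> lam a. norm (fourier (\<lambda>t. complex_of_real (\<theta> t) * duhamel_multiplier a t lam) \<mu>)
      \<le> K * (lorentzian (\<mu> - lam) + lorentzian (\<mu> - a)) / (1 + \<bar>lam - a\<bar>)"
    using cutoff_kernel_bound[OF assms] by blast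
  show ?thesis
  proof (rule that[of "K / (2 * pi)"])
    fix wh \<xi> \<mu>
    assume "wh \<xi> \<in> borel_measurable borel" "modulation_L1 wh \<xi> < \<infinity>"
    note slice = this[unfolded modulation_L1_def]
    have "cutoff_duhamel_hat \<theta> wh \<xi> \<mu>
        = fourier (\<lambda>t. complex_of_real (\<theta> t) * (LINT lam|lborel. duhamel_multiplier (\<xi>^3) t lam * wh \<xi> lam)) \<mu>
          / complex_of_real (2 * pi)"
      unfolding cutoff_duhamel_hat_def duhamel_x_hat_eq fourier_def by (simp add: mult.assoc)
    then have "ennreal (cmod (cutoff_duhamel_hat \<theta> wh \<xi> \<mu>))
        = ennreal (1 / (2 * pi))
          * ennreal (norm (fourier (\<lambda>t. complex_of_real (\<theta> t) * (LINT lam|lborel. duhamel_multiplier (\<xi>^3) t lam * wh \<xi> lam)) \<mu>))"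
      by (simp add: norm_divide ennreal_mult[symmetric])
    also have "\<dots> \<le> ennreal (1 / (2 * pi)) * (ennreal K * duhamel_majorant (\<xi>^3) (\<lambda>l. cmod (wh \<xi> l)) \<mu>)"
      by (intro mult_left_mono norm_fourier_cutoff_duhamel_le_majorant[OF assms \<open>0 \<le> K\<close> kernel]) (use slice in auto)
    also have "\<dots> = ennreal (K / (2 * pi)) * duhamel_majorant (\<xi>^3) (\<lambda>l. cmod (wh \<xi> l)) \<mu>"
      using \<open>0 \<le> K\<close> by (simp add: ennreal_mult[symmetric] mult.assoc[symmetric])
    finally show "ennreal (cmod (cutoff_duhamel_hat \<theta> wh \<xi> \<mu>))
        \<le> ennreal (K / (2 * pi)) * duhamel_majorant (\<xi>^3) (\<lambda>l. cmod (wh \<xi> l)) \<mu>" .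
  qed (use \<open>0 \<le> K\<close> in simp)
qed

section \<open>Weighted \<open>L\<^sup>2\<close> estimates\<close>

lemma nn_integral_one_plus_powr_atLeast_0:
  fixes q :: real assumes "q < -1"
  shows "(\<integral>\<^sup>+x. ennreal ((1 + x) powr q) * indicator {0..} x \<partial>lborel) = ennreal (- 1 / (q + 1))"
proof -
  have "(\<integral>\<^sup>+x. ennreal ((1 + x) powr q) * indicator {0..} x \<partial>lborel) = ennreal (0 - (1 + 0) powr (q + 1) / (q + 1))"
  proof (rule nn_integral_FTC_atLeast)
    show "((\<lambda>x. (1 + x) powr (q + 1) / (q + 1)) has_real_derivative (1 + x) powr q) (at x)" if "0 \<le> x" for x
      using that \<open>q < -1\<close> by (auto intro!: derivative_eq_intros)
    have "((\<lambda>x. (1 + x) powr (q + 1)) \<longlongrightarrow> 0) at_top"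
      by (rule tendsto_neg_powr) (use \<open>q < -1\<close> in \<open>auto intro!: filterlim_tendsto_add_at_top filterlim_ident\<close>)
    then show "((\<lambda>x. (1 + x) powr (q + 1) / (q + 1)) \<longlongrightarrow> 0) at_top"
      by (rule tendsto_divide_zero)
  qed auto
  then show ?thesis by simp
qed

lemma nn_integral_one_plus_abs_powr_finite:
  fixes q :: real assumes "q < -1"
  shows "(\<integral>\<^sup>+x. ennreal ((1 + \<bar>x\<bar>) powr q) \<partial>lborel) < \<infinity>"
proof -
  define \<phi> where "\<phi> x = ennreal ((1 + x) powr q) * indicator {0..} x" for x
  have [measurable]: "\<phi> \<in> borel_measurable borel" unfolding \<phi>_def by measurable
  have "(\<integral>\<^sup>+x. ennreal ((1 + \<bar>x\<bar>) powr q) \<partial>lborel) \<le> (\<integral>\<^sup>+x. \<phi> x + \<phi> (- x) \<partial>lborel)"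
    by (intro nn_integral_mono) (auto simp: \<phi>_def indicator_def)
  also have "\<dots> = (\<integral>\<^sup>+x. \<phi> x \<partial>lborel) + (\<integral>\<^sup>+x. \<phi> (- x) \<partial>lborel)"
    by (rule nn_integral_add) auto
  also have "(\<integral>\<^sup>+x. \<phi> (- x) \<partial>lborel) = (\<integral>\<^sup>+x. \<phi> x \<partial>lborel)"
    using nn_integral_real_affine[of \<phi> "-1" 0] by simp
  also have "(\<integral>\<^sup>+x. \<phi> x \<partial>lborel) + (\<integral>\<^sup>+x. \<phi> x \<partial>lborel) < \<infinity>"
    unfolding \<phi>_def nn_integral_one_plus_powr_atLeast_0[OF assms] by simp
  finally show ?thesis .
qed

definition weighted_lorentzian :: "real \<Rightarrow> real \<Rightarrow> real" where
  "weighted_lorentzian p x = (1 + \<bar>x\<bar>) powr p * lorentzian x"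

lemma weighted_lorentzian_measurable [measurable]: "weighted_lorentzian p \<in> borel_measurable borel"
  unfolding weighted_lorentzian_def by measurable

lemma weighted_lorentzian_nonneg: "0 \<le> weighted_lorentzian p x"
  unfolding weighted_lorentzian_def using lorentzian_pos[of x] by simp

lemma weighted_lorentzian_le: "weighted_lorentzian p x \<le> 2 * (1 + \<bar>x\<bar>) powr (p - 2)"
proof -
  have "(1 + \<bar>x\<bar>)\<^sup>2 \<le> 2 * (1 + x\<^sup>2)"
    using zero_le_power2[of "\<bar>x\<bar> - 1"] by (simp add: power2_eq_square algebra_simps)
  then have "lorentzian x \<le> 2 / (1 + \<bar>x\<bar>)\<^sup>2"
    unfolding lorentzian_def by (simp add: divide_simps add_pos_nonneg)
  then have "weighted_lorentzian p x \<le> (1 + \<bar>x\<bar>) powr p * (2 / (1 + \<bar>x\<bar>)\<^sup>2)"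
    unfolding weighted_lorentzian_def by (intro mult_left_mono) auto
  also have "\<dots> = 2 * (1 + \<bar>x\<bar>) powr (p - 2)"
  proof -
    have "(1 + \<bar>x\<bar>) powr 2 = (1 + \<bar>x\<bar>)\<^sup>2" by (rule powr_numeral) simp
    then show ?thesis by (simp add: powr_diff)
  qed
  finally show ?thesis .
qed

lemma weighted_lorentzian_le_2:
  assumes "p \<le> 2" shows "weighted_lorentzian p x \<le> 2"
proof -
  have "(1 + \<bar>x\<bar>) powr (p - 2) \<le> (1 + \<bar>x\<bar>) powr 0" using assms by (intro powr_mono) auto
  moreover have "(0::real) < 1 + \<bar>x\<bar>" by (rule add_pos_nonneg) auto
  ultimately have "(1 + \<bar>x\<bar>) powr (p - 2) \<le> 1" by simp
  then show ?thesis using weighted_lorentzian_le[of p x] by linarith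
qed

lemma integrable_weighted_lorentzian:
  assumes "p < 1" shows "integrable lborel (weighted_lorentzian p)"
proof (rule integrableI_bounded)
  have "(\<integral>\<^sup>+x. ennreal (norm (weighted_lorentzian p x)) \<partial>lborel) \<le> (\<integral>\<^sup>+x. ennreal (2 * (1 + \<bar>x\<bar>) powr (p - 2)) \<partial>lborel)"
    using weighted_lorentzian_le[of p] weighted_lorentzian_nonneg[of p]
    by (intro nn_integral_mono ennreal_leI) simp
  also have "\<dots> = 2 * (\<integral>\<^sup>+x. ennreal ((1 + \<bar>x\<bar>) powr (p - 2)) \<partial>lborel)"
    by (simp add: ennreal_mult nn_integral_cmult)
  also have "\<dots> < \<infinity>"
    using nn_integral_one_plus_abs_powr_finite[of "p - 2"] assms by (simp add: ennreal_mult_less_top)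
  finally show "(\<integral>\<^sup>+x. ennreal (norm (weighted_lorentzian p x)) \<partial>lborel) < \<infinity>" .
qed simp

lemma integrable_weighted_lorentzian_square:
  assumes "p < 1" shows "integrable lborel (\<lambda>x. (weighted_lorentzian p x)\<^sup>2)"
proof (rule Bochner_Integration.integrable_bound)
  show "integrable lborel (\<lambda>x. 2 * weighted_lorentzian p x)"
    using integrable_weighted_lorentzian[OF assms] by simp
  show "AE x in lborel. norm ((weighted_lorentzian p x)\<^sup>2) \<le> norm (2 * weighted_lorentzian p x)"
    using weighted_lorentzian_le_2[of p] weighted_lorentzian_nonneg[of p] assms
    by (auto simp: power2_eq_square intro!: mult_right_mono)
qed simp

lemma nn_integral_lborel_shift:
  fixes f :: "real \<Rightarrow> ennreal"
  assumes [measurable]: "f \<in> borel_measurable borel"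
  shows "(\<integral>\<^sup>+x. f (x - c) \<partial>lborel) = (\<integral>\<^sup>+x. f x \<partial>lborel)"
    and "(\<integral>\<^sup>+x. f (c - x) \<partial>lborel) = (\<integral>\<^sup>+x. f x \<partial>lborel)"
  using nn_integral_real_affine[of f 1 "-c"] nn_integral_real_affine[of f "-1" c] by simp_all

text \<open>Young's inequality \<open>\<parallel>h * V\<parallel>\<^sub>2 \<le> \<parallel>h\<parallel>\<^sub>1 \<parallel>V\<parallel>\<^sub>2\<close>, via Cauchy-Schwarz against the
  measure \<open>h(\<mu> - l) dl\<close> and Tonelli.\<close>
lemma nn_integral_convolution_square_le:
  fixes h :: "real \<Rightarrow> real" and V :: "real \<Rightarrow> ennreal"
  assumes [measurable]: "h \<in> borel_measurable borel" "V \<in> borel_measurable borel"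
    and h_nonneg: "\<And>x. 0 \<le> h x"
  shows "(\<integral>\<^sup>+\<mu>. (\<integral>\<^sup>+l. ennreal (h (\<mu> - l)) * V l \<partial>lborel)\<^sup>2 \<partial>lborel)
     \<le> (\<integral>\<^sup>+x. ennreal (h x) \<partial>lborel)\<^sup>2 * (\<integral>\<^sup>+l. (V l)\<^sup>2 \<partial>lborel)"
proof -
  define H where "H = (\<integral>\<^sup>+x. ennreal (h x) \<partial>lborel)"
  have pointwise: "(\<integral>\<^sup>+l. ennreal (h (\<mu> - l)) * V l \<partial>lborel)\<^sup>2 \<le> H * (\<integral>\<^sup>+l. ennreal (h (\<mu> - l)) * (V l)\<^sup>2 \<partial>lborel)" for \<mu>
  proof -
    define f where "f l = ennreal (sqrt (h (\<mu> - l)))" for l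
    define g where "g l = f l * V l" for l
    have [measurable]: "f \<in> borel_measurable lborel" "g \<in> borel_measurable lborel"
      unfolding f_def g_def by measurable
    have f_sq: "f l ^ 2 = ennreal (h (\<mu> - l))" for l
      unfolding f_def using h_nonneg[of "\<mu> - l"] by (simp add: ennreal_power)
    have fg: "f l * g l = ennreal (h (\<mu> - l)) * V l" for l
      unfolding g_def mult.assoc[symmetric] f_sq[symmetric] by (simp add: power2_eq_square)
    have g_sq: "g l ^ 2 = ennreal (h (\<mu> - l)) * (V l)\<^sup>2" for l
      unfolding g_def power_mult_distrib f_sq ..
    have "(\<integral>\<^sup>+l. f l * g l \<partial>lborel)\<^sup>2 \<le> (\<integral>\<^sup>+l. f l ^ 2 \<partial>lborel) * (\<integral>\<^sup>+l. g l ^ 2 \<partial>lborel)"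
      by (rule Cauchy_Schwarz_nn_integral) auto
    moreover have "(\<integral>\<^sup>+l. f l ^ 2 \<partial>lborel) = H"
      unfolding H_def f_sq by (rule nn_integral_lborel_shift(2)[where f="\<lambda>x. ennreal (h x)"]) measurable
    ultimately show ?thesis by (simp only: fg g_sq)
  qed
  have "(\<integral>\<^sup>+\<mu>. (\<integral>\<^sup>+l. ennreal (h (\<mu> - l)) * V l \<partial>lborel)\<^sup>2 \<partial>lborel)
      \<le> (\<integral>\<^sup>+\<mu>. H * (\<integral>\<^sup>+l. ennreal (h (\<mu> - l)) * (V l)\<^sup>2 \<partial>lborel) \<partial>lborel)"
    by (intro nn_integral_mono pointwise)
  also have "\<dots> = H * (\<integral>\<^sup>+\<mu>. (\<integral>\<^sup>+l. ennreal (h (\<mu> - l)) * (V l)\<^sup>2 \<partial>lborel) \<partial>lborel)"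
    by (rule nn_integral_cmult) measurable
  also have "(\<integral>\<^sup>+\<mu>. (\<integral>\<^sup>+l. ennreal (h (\<mu> - l)) * (V l)\<^sup>2 \<partial>lborel) \<partial>lborel)
      = (\<integral>\<^sup>+l. (\<integral>\<^sup>+\<mu>. ennreal (h (\<mu> - l)) * (V l)\<^sup>2 \<partial>lborel) \<partial>lborel)"
    by (rule lborel_pair.Fubini'[symmetric]) measurable
  also have "\<dots> = (\<integral>\<^sup>+l. H * (V l)\<^sup>2 \<partial>lborel)"
  proof (intro nn_integral_cong)
    fix l
    have "(\<integral>\<^sup>+\<mu>. ennreal (h (\<mu> - l)) * (V l)\<^sup>2 \<partial>lborel) = (\<integral>\<^sup>+\<mu>. ennreal (h (\<mu> - l)) \<partial>lborel) * (V l)\<^sup>2"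
      by (rule nn_integral_multc) measurable
    also have "(\<integral>\<^sup>+\<mu>. ennreal (h (\<mu> - l)) \<partial>lborel) = H"
      unfolding H_def by (rule nn_integral_lborel_shift(1)[where f="\<lambda>x. ennreal (h x)"]) measurable
    finally show "(\<integral>\<^sup>+\<mu>. ennreal (h (\<mu> - l)) * (V l)\<^sup>2 \<partial>lborel) = H * (V l)\<^sup>2" .
  qed
  also have "H * \<dots> = H\<^sup>2 * (\<integral>\<^sup>+l. (V l)\<^sup>2 \<partial>lborel)"
    by (simp add: nn_integral_cmult power2_eq_square mult.assoc)
  finally show ?thesis unfolding H_def .
qed

lemma ennreal_add_square_le: "((x::ennreal) + y)\<^sup>2 \<le> 2 * x\<^sup>2 + 2 * y\<^sup>2"
proof -
  have "(x + y)\<^sup>2 = x\<^sup>2 + 2 * x * y + y\<^sup>2" by (simp add: power2_sum)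
  also have "\<dots> \<le> x\<^sup>2 + (x\<^sup>2 + y\<^sup>2) + y\<^sup>2" by (intro add_mono order_refl sum_of_squares_ge_ennreal)
  also have "\<dots> = 2 * x\<^sup>2 + 2 * y\<^sup>2" by (simp add: mult_2 algebra_simps)
  finally show ?thesis .
qed

lemma weighted_majorant_le_convolution:
  fixes W \<omega> v h :: "real \<Rightarrow> real"
  assumes [measurable]: "W \<in> borel_measurable borel" "v \<in> borel_measurable borel" "h \<in> borel_measurable borel"
    and W_nonneg: "\<And>l. 0 \<le> W l" and "0 \<le> \<omega> \<mu>"
    and weight: "\<And>l. \<omega> \<mu> * lorentzian (\<mu> - l) / (1 + \<bar>l - a\<bar>) \<le> h (\<mu> - l) * v l"
    and weight_diag: "\<omega> \<mu> * lorentzian (\<mu> - a) \<le> d * h (\<mu> - a)"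
  shows "ennreal (\<omega> \<mu>) * duhamel_majorant a W \<mu>
    \<le> (\<integral>\<^sup>+l. ennreal (h (\<mu> - l) * (W l * v l)) \<partial>lborel)
       + ennreal (d * h (\<mu> - a)) * (\<integral>\<^sup>+l. ennreal (W l / (1 + \<bar>l - a\<bar>)) \<partial>lborel)"
proof -
  have "ennreal (\<omega> \<mu>) * duhamel_majorant a W \<mu>
      = (\<integral>\<^sup>+l. ennreal (\<omega> \<mu> * (lorentzian (\<mu> - l) * (W l / (1 + \<bar>l - a\<bar>)))) \<partial>lborel)
        + ennreal (\<omega> \<mu> * lorentzian (\<mu> - a)) * (\<integral>\<^sup>+l. ennreal (W l / (1 + \<bar>l - a\<bar>)) \<partial>lborel)"
    using \<open>0 \<le> \<omega> \<mu>\<close> lorentzian_pos[of "\<mu> - a"] unfolding duhamel_majorant_def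
    by (simp add: distrib_left nn_integral_cmult[symmetric] ennreal_mult'[symmetric] mult.assoc)
  also have "\<dots> \<le> (\<integral>\<^sup>+l. ennreal (h (\<mu> - l) * (W l * v l)) \<partial>lborel)
       + ennreal (d * h (\<mu> - a)) * (\<integral>\<^sup>+l. ennreal (W l / (1 + \<bar>l - a\<bar>)) \<partial>lborel)"
  proof (intro add_mono mult_right_mono nn_integral_mono ennreal_leI)
    fix l
    have "\<omega> \<mu> * (lorentzian (\<mu> - l) * (W l / (1 + \<bar>l - a\<bar>))) = \<omega> \<mu> * lorentzian (\<mu> - l) / (1 + \<bar>l - a\<bar>) * W l"
      by simp
    also have "\<dots> \<le> h (\<mu> - l) * v l * W l" using weight[of l] W_nonneg[of l] by (rule mult_right_mono)
    finally show "\<omega> \<mu> * (lorentzian (\<mu> - l) * (W l / (1 + \<bar>l - a\<bar>))) \<le> h (\<mu> - l) * (W l * v l)"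
      by (simp add: mult_ac)
  qed (use weight_diag in auto)
  finally show ?thesis .
qed

lemma weighted_square_le_of_majorant:
  fixes W Fc \<omega> v h :: "real \<Rightarrow> real"
  assumes [measurable]: "W \<in> borel_measurable borel" "v \<in> borel_measurable borel" "h \<in> borel_measurable borel"
    and nonneg: "\<And>l. 0 \<le> W l" "\<And>l. 0 \<le> v l" "\<And>x. 0 \<le> h x" "0 \<le> \<omega> \<mu>" "0 \<le> Fc \<mu>"
    and "0 \<le> c" "0 \<le> d"
    and major: "ennreal (Fc \<mu>) \<le> ennreal c * duhamel_majorant a W \<mu>"
    and weight: "\<And>l. \<omega> \<mu> * lorentzian (\<mu> - l) / (1 + \<bar>l - a\<bar>) \<le> h (\<mu> - l) * v l"
    and weight_diag: "\<omega> \<mu> * lorentzian (\<mu> - a) \<le> d * h (\<mu> - a)"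
  shows "ennreal ((\<omega> \<mu> * Fc \<mu>)\<^sup>2)
    \<le> ennreal (2 * c\<^sup>2) * (\<integral>\<^sup>+l. ennreal (h (\<mu> - l)) * ennreal (W l * v l) \<partial>lborel)\<^sup>2
      + ennreal (2 * c\<^sup>2 * d\<^sup>2) * (ennreal ((h (\<mu> - a))\<^sup>2) * (\<integral>\<^sup>+l. ennreal (W l / (1 + \<bar>l - a\<bar>)) \<partial>lborel)\<^sup>2)"
proof -
  define N where "N = (\<integral>\<^sup>+l. ennreal (W l / (1 + \<bar>l - a\<bar>)) \<partial>lborel)"
  define Q where "Q = (\<integral>\<^sup>+l. ennreal (h (\<mu> - l)) * ennreal (W l * v l) \<partial>lborel)"
  have "ennreal (\<omega> \<mu> * Fc \<mu>) = ennreal (\<omega> \<mu>) * ennreal (Fc \<mu>)"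
    using nonneg by (simp add: ennreal_mult)
  also have "\<dots> \<le> ennreal c * (ennreal (\<omega> \<mu>) * duhamel_majorant a W \<mu>)"
    using mult_left_mono[OF major, of "ennreal (\<omega> \<mu>)"] by (simp add: mult_ac)
  also have "\<dots> \<le> ennreal c * (Q + ennreal (d * h (\<mu> - a)) * N)"
    using weighted_majorant_le_convolution[of W v h \<omega> \<mu> a d] nonneg weight weight_diag
    by (intro mult_left_mono) (auto simp: Q_def N_def ennreal_mult)
  finally have "(ennreal (\<omega> \<mu> * Fc \<mu>))\<^sup>2 \<le> (ennreal c)\<^sup>2 * (Q + ennreal (d * h (\<mu> - a)) * N)\<^sup>2"
    by (simp add: power_mono flip: power_mult_distrib)
  also have "\<dots> \<le> (ennreal c)\<^sup>2 * (2 * Q\<^sup>2 + 2 * (ennreal (d * h (\<mu> - a)) * N)\<^sup>2)"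
    by (intro mult_left_mono ennreal_add_square_le) simp
  also have "\<dots> = ennreal (2 * c\<^sup>2) * Q\<^sup>2 + ennreal (2 * c\<^sup>2 * d\<^sup>2) * (ennreal ((h (\<mu> - a))\<^sup>2) * N\<^sup>2)"
    using \<open>0 \<le> c\<close> \<open>0 \<le> d\<close> nonneg
    by (simp add: ennreal_mult ennreal_power power_mult_distrib distrib_left mult_ac)
  finally show ?thesis using nonneg by (simp add: ennreal_power Q_def N_def)
qed

lemma nn_integral_weighted_square_le_of_majorant:
  fixes W Fc \<omega> v h :: "real \<Rightarrow> real"
  assumes [measurable]: "W \<in> borel_measurable borel" "v \<in> borel_measurable borel" "h \<in> borel_measurable borel"
    and nonneg: "\<And>l. 0 \<le> W l" "\<And>l. 0 \<le> v l" "\<And>x. 0 \<le> h x" "\<And>\<mu>. 0 \<le> \<omega> \<mu>" "\<And>\<mu>. 0 \<le> Fc \<mu>"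
    and "0 \<le> c" "0 \<le> d"
    and h_L1: "integrable lborel h" and h_L2: "integrable lborel (\<lambda>x. (h x)\<^sup>2)"
    and major: "\<And>\<mu>. ennreal (Fc \<mu>) \<le> ennreal c * duhamel_majorant a W \<mu>"
    and weight: "\<And>\<mu> l. \<omega> \<mu> * lorentzian (\<mu> - l) / (1 + \<bar>l - a\<bar>) \<le> h (\<mu> - l) * v l"
    and weight_diag: "\<And>\<mu>. \<omega> \<mu> * lorentzian (\<mu> - a) \<le> d * h (\<mu> - a)"
  shows "(\<integral>\<^sup>+\<mu>. ennreal ((\<omega> \<mu> * Fc \<mu>)\<^sup>2) \<partial>lborel)
    \<le> ennreal (2 * c\<^sup>2 * (\<integral>x. h x \<partial>lborel)\<^sup>2) * (\<integral>\<^sup>+l. ennreal ((W l * v l)\<^sup>2) \<partial>lborel)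
      + ennreal (2 * c\<^sup>2 * d\<^sup>2 * (\<integral>x. (h x)\<^sup>2 \<partial>lborel)) * (\<integral>\<^sup>+l. ennreal (W l / (1 + \<bar>l - a\<bar>)) \<partial>lborel)\<^sup>2"
proof -
  define N where "N = (\<integral>\<^sup>+l. ennreal (W l / (1 + \<bar>l - a\<bar>)) \<partial>lborel)"
  define Q where "Q \<mu> = (\<integral>\<^sup>+l. ennreal (h (\<mu> - l)) * ennreal (W l * v l) \<partial>lborel)" for \<mu>
  have [measurable]: "Q \<in> borel_measurable borel" unfolding Q_def by measurable
  have pointwise: "ennreal ((\<omega> \<mu> * Fc \<mu>)\<^sup>2)
      \<le> ennreal (2 * c\<^sup>2) * (Q \<mu>)\<^sup>2 + ennreal (2 * c\<^sup>2 * d\<^sup>2) * (ennreal ((h (\<mu> - a))\<^sup>2) * N\<^sup>2)" for \<mu>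
    unfolding Q_def N_def
    by (rule weighted_square_le_of_majorant) (use assms in auto)
  have "(\<integral>\<^sup>+\<mu>. ennreal ((\<omega> \<mu> * Fc \<mu>)\<^sup>2) \<partial>lborel)
      \<le> (\<integral>\<^sup>+\<mu>. ennreal (2 * c\<^sup>2) * (Q \<mu>)\<^sup>2 + ennreal (2 * c\<^sup>2 * d\<^sup>2) * (ennreal ((h (\<mu> - a))\<^sup>2) * N\<^sup>2) \<partial>lborel)"
    by (intro nn_integral_mono pointwise)
  also have "\<dots> = ennreal (2 * c\<^sup>2) * (\<integral>\<^sup>+\<mu>. (Q \<mu>)\<^sup>2 \<partial>lborel)
      + ennreal (2 * c\<^sup>2 * d\<^sup>2) * ((\<integral>\<^sup>+\<mu>. ennreal ((h (\<mu> - a))\<^sup>2) \<partial>lborel) * N\<^sup>2)"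
    by (simp add: nn_integral_add nn_integral_cmult nn_integral_multc)
  also have "\<dots> \<le> ennreal (2 * c\<^sup>2) * ((\<integral>\<^sup>+x. ennreal (h x) \<partial>lborel)\<^sup>2 * (\<integral>\<^sup>+l. (ennreal (W l * v l))\<^sup>2 \<partial>lborel))
      + ennreal (2 * c\<^sup>2 * d\<^sup>2) * ((\<integral>\<^sup>+x. ennreal ((h x)\<^sup>2) \<partial>lborel) * N\<^sup>2)"
  proof -
    have "(\<integral>\<^sup>+\<mu>. ennreal ((h (\<mu> - a))\<^sup>2) \<partial>lborel) = (\<integral>\<^sup>+x. ennreal ((h x)\<^sup>2) \<partial>lborel)"
      by (rule nn_integral_lborel_shift(1)[where f="\<lambda>x. ennreal ((h x)\<^sup>2)"]) measurable
    then show ?thesis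
      unfolding Q_def using nonneg by (intro add_mono mult_left_mono nn_integral_convolution_square_le order_refl) auto
  qed
  also have "\<dots> = ennreal (2 * c\<^sup>2 * (\<integral>x. h x \<partial>lborel)\<^sup>2) * (\<integral>\<^sup>+l. ennreal ((W l * v l)\<^sup>2) \<partial>lborel)
      + ennreal (2 * c\<^sup>2 * d\<^sup>2 * (\<integral>x. (h x)\<^sup>2 \<partial>lborel)) * N\<^sup>2"
  proof -
    have "(\<integral>\<^sup>+l. (ennreal (W l * v l))\<^sup>2 \<partial>lborel) = (\<integral>\<^sup>+l. ennreal ((W l * v l)\<^sup>2) \<partial>lborel)"
      using nonneg by (intro nn_integral_cong) (simp add: ennreal_power del: ennreal_mult')
    then show ?thesis
      using h_L1 h_L2 nonneg \<open>0 \<le> c\<close>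
      by (simp add: nn_integral_eq_integral ennreal_power ennreal_mult integral_nonneg_AE mult_ac del: ennreal_mult')
  qed
  finally show ?thesis unfolding N_def .
qed

lemma one_plus_abs_add_powr_le:
  fixes x y p :: real assumes "0 \<le> p"
  shows "(1 + \<bar>x + y\<bar>) powr p \<le> (1 + \<bar>x\<bar>) powr p * (1 + \<bar>y\<bar>) powr p"
proof -
  have "1 + \<bar>x + y\<bar> \<le> 1 + \<bar>x\<bar> + \<bar>y\<bar> + \<bar>x\<bar> * \<bar>y\<bar>"
    using abs_triangle_ineq[of x y] mult_nonneg_nonneg[OF abs_ge_zero abs_ge_zero, of x y] by linarith
  then have "1 + \<bar>x + y\<bar> \<le> (1 + \<bar>x\<bar>) * (1 + \<bar>y\<bar>)"
    by (simp add: algebra_simps)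
  then have "(1 + \<bar>x + y\<bar>) powr p \<le> ((1 + \<bar>x\<bar>) * (1 + \<bar>y\<bar>)) powr p"
    using assms by (intro powr_mono2) auto
  then show ?thesis by (simp add: powr_mult)
qed

lemma powr_square: "((x::real) powr p)\<^sup>2 = x powr (2 * p)"
  by (simp add: power2_eq_square powr_add[symmetric])

lemma modulation_weight_le:
  assumes "0 < b" "b \<le> 1/2"
  shows "(1 + \<bar>\<mu> - a\<bar>) powr b * lorentzian (\<mu> - l) / (1 + \<bar>l - a\<bar>)
    \<le> weighted_lorentzian b (\<mu> - l) * (1 + \<bar>l - a\<bar>) powr (- b)"
proof -
  have "(1 + \<bar>\<mu> - a\<bar>) powr b * lorentzian (\<mu> - l) / (1 + \<bar>l - a\<bar>)
      \<le> (1 + \<bar>\<mu> - l\<bar>) powr b * (1 + \<bar>l - a\<bar>) powr b * lorentzian (\<mu> - l) / (1 + \<bar>l - a\<bar>)"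
    using one_plus_abs_add_powr_le[of b "\<mu> - l" "l - a"] \<open>0 < b\<close> lorentzian_pos[of "\<mu> - l"]
    by (intro divide_right_mono mult_right_mono) auto
  also have "\<dots> = weighted_lorentzian b (\<mu> - l) * (1 + \<bar>l - a\<bar>) powr (b - 1)"
    by (simp add: weighted_lorentzian_def powr_diff)
  also have "\<dots> \<le> weighted_lorentzian b (\<mu> - l) * (1 + \<bar>l - a\<bar>) powr (- b)"
    using \<open>b \<le> 1/2\<close> by (intro mult_left_mono powr_mono weighted_lorentzian_nonneg) auto
  finally show ?thesis .
qed

lemma low_frequency_weight_le:
  assumes "0 < \<alpha>" "\<bar>a\<bar> < 1"
  shows "(1 + \<bar>\<mu>\<bar>) powr \<alpha> * lorentzian (\<mu> - l) / (1 + \<bar>l - a\<bar>)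
    \<le> weighted_lorentzian \<alpha> (\<mu> - l) * (2 * (1 + \<bar>l\<bar>) powr (\<alpha> - 1))"
proof -
  have "1 / (1 + \<bar>l - a\<bar>) \<le> 2 / (1 + \<bar>l\<bar>)"
    using \<open>\<bar>a\<bar> < 1\<close> by (simp add: divide_simps) (smt (verit) abs_triangle_ineq4)
  have "(1 + \<bar>\<mu>\<bar>) powr \<alpha> * lorentzian (\<mu> - l) / (1 + \<bar>l - a\<bar>)
      \<le> (1 + \<bar>\<mu> - l\<bar>) powr \<alpha> * (1 + \<bar>l\<bar>) powr \<alpha> * lorentzian (\<mu> - l) * (1 / (1 + \<bar>l - a\<bar>))"
    using one_plus_abs_add_powr_le[of \<alpha> "\<mu> - l" l] \<open>0 < \<alpha>\<close> lorentzian_pos[of "\<mu> - l"]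
    by (simp add: mult_right_mono divide_right_mono)
  also have "\<dots> \<le> (1 + \<bar>\<mu> - l\<bar>) powr \<alpha> * (1 + \<bar>l\<bar>) powr \<alpha> * lorentzian (\<mu> - l) * (2 / (1 + \<bar>l\<bar>))"
    using \<open>1 / (1 + \<bar>l - a\<bar>) \<le> 2 / (1 + \<bar>l\<bar>)\<close> lorentzian_pos[of "\<mu> - l"] by (intro mult_left_mono) auto
  also have "\<dots> = weighted_lorentzian \<alpha> (\<mu> - l) * (2 * (1 + \<bar>l\<bar>) powr (\<alpha> - 1))"
    by (simp add: weighted_lorentzian_def powr_diff)
  finally show ?thesis .
qed

lemma low_frequency_weight_diagonal_le:
  assumes "0 < \<alpha>" "\<alpha> < 1" "\<bar>a\<bar> < 1"
  shows "(1 + \<bar>\<mu>\<bar>) powr \<alpha> * lorentzian (\<mu> - a) \<le> 2 * weighted_lorentzian \<alpha> (\<mu> - a)"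
proof -
  have "(1 + \<bar>a\<bar>) powr \<alpha> \<le> 2"
    using powr_mono2[of \<alpha> "1 + \<bar>a\<bar>" 2] powr_mono[of \<alpha> 1 2] assms by simp
  have "(1 + \<bar>\<mu>\<bar>) powr \<alpha> \<le> (1 + \<bar>\<mu> - a\<bar>) powr \<alpha> * (1 + \<bar>a\<bar>) powr \<alpha>"
    using one_plus_abs_add_powr_le[of \<alpha> "\<mu> - a" a] \<open>0 < \<alpha>\<close> by simp
  also have "\<dots> \<le> (1 + \<bar>\<mu> - a\<bar>) powr \<alpha> * 2"
    using \<open>(1 + \<bar>a\<bar>) powr \<alpha> \<le> 2\<close> by (intro mult_left_mono) auto
  finally show ?thesis
    using lorentzian_pos[of "\<mu> - a"] by (simp add: weighted_lorentzian_def mult_right_mono)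
qed

lemma modulation_weighted_square_le:
  fixes W Fc :: "real \<Rightarrow> real"
  assumes [measurable]: "W \<in> borel_measurable borel"
    and "\<And>l. 0 \<le> W l" "\<And>\<mu>. 0 \<le> Fc \<mu>" "0 < b" "b \<le> 1/2" "0 \<le> c"
    and major: "\<And>\<mu>. ennreal (Fc \<mu>) \<le> ennreal c * duhamel_majorant a W \<mu>"
  shows "(\<integral>\<^sup>+\<mu>. ennreal ((1 + \<bar>\<mu> - a\<bar>) powr (2*b) * (Fc \<mu>)\<^sup>2) \<partial>lborel)
    \<le> ennreal (2 * c\<^sup>2 * (\<integral>x. weighted_lorentzian b x \<partial>lborel)\<^sup>2)
        * (\<integral>\<^sup>+l. ennreal ((W l)\<^sup>2 / (1 + \<bar>l - a\<bar>) powr (2*b)) \<partial>lborel)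
      + ennreal (2 * c\<^sup>2 * (\<integral>x. (weighted_lorentzian b x)\<^sup>2 \<partial>lborel)) * (\<integral>\<^sup>+l. ennreal (W l / (1 + \<bar>l - a\<bar>)) \<partial>lborel)\<^sup>2"
proof -
  have "(\<integral>\<^sup>+\<mu>. ennreal (((1 + \<bar>\<mu> - a\<bar>) powr b * Fc \<mu>)\<^sup>2) \<partial>lborel)
    \<le> ennreal (2 * c\<^sup>2 * (\<integral>x. weighted_lorentzian b x \<partial>lborel)\<^sup>2)
        * (\<integral>\<^sup>+l. ennreal ((W l * (1 + \<bar>l - a\<bar>) powr (- b))\<^sup>2) \<partial>lborel)
      + ennreal (2 * c\<^sup>2 * 1\<^sup>2 * (\<integral>x. (weighted_lorentzian b x)\<^sup>2 \<partial>lborel))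
          * (\<integral>\<^sup>+l. ennreal (W l / (1 + \<bar>l - a\<bar>)) \<partial>lborel)\<^sup>2"
    by (rule nn_integral_weighted_square_le_of_majorant[OF _ _ _ _ _ weighted_lorentzian_nonneg _ _ _ _
        integrable_weighted_lorentzian integrable_weighted_lorentzian_square major modulation_weight_le])
      (use assms in \<open>auto simp: weighted_lorentzian_def\<close>)
  moreover have "((1 + \<bar>\<mu> - a\<bar>) powr b * Fc \<mu>)\<^sup>2 = (1 + \<bar>\<mu> - a\<bar>) powr (2*b) * (Fc \<mu>)\<^sup>2" for \<mu>
    by (simp add: power_mult_distrib powr_square)
  moreover have "(W l * (1 + \<bar>l - a\<bar>) powr (- b))\<^sup>2 = (W l)\<^sup>2 / (1 + \<bar>l - a\<bar>) powr (2*b)" for l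
    by (simp add: power_mult_distrib power_divide powr_square powr_minus_divide)
  ultimately show ?thesis by simp
qed

lemma low_frequency_weighted_square_le:
  fixes W Fc :: "real \<Rightarrow> real"
  assumes [measurable]: "W \<in> borel_measurable borel"
    and "\<And>l. 0 \<le> W l" "\<And>\<mu>. 0 \<le> Fc \<mu>" "0 < \<alpha>" "\<alpha> < 1" "\<bar>a\<bar> < 1" "0 \<le> c"
    and major: "\<And>\<mu>. ennreal (Fc \<mu>) \<le> ennreal c * duhamel_majorant a W \<mu>"
  shows "(\<integral>\<^sup>+\<mu>. ennreal ((1 + \<bar>\<mu>\<bar>) powr (2*\<alpha>) * (Fc \<mu>)\<^sup>2) \<partial>lborel)
    \<le> ennreal (8 * c\<^sup>2 * (\<integral>x. weighted_lorentzian \<alpha> x \<partial>lborel)\<^sup>2)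
        * (\<integral>\<^sup>+l. ennreal ((W l)\<^sup>2 / (1 + \<bar>l\<bar>) powr (2*(1-\<alpha>))) \<partial>lborel)
      + ennreal (8 * c\<^sup>2 * (\<integral>x. (weighted_lorentzian \<alpha> x)\<^sup>2 \<partial>lborel)) * (\<integral>\<^sup>+l. ennreal (W l / (1 + \<bar>l - a\<bar>)) \<partial>lborel)\<^sup>2"
proof -
  have "(\<integral>\<^sup>+\<mu>. ennreal (((1 + \<bar>\<mu>\<bar>) powr \<alpha> * Fc \<mu>)\<^sup>2) \<partial>lborel)
    \<le> ennreal (2 * c\<^sup>2 * (\<integral>x. weighted_lorentzian \<alpha> x \<partial>lborel)\<^sup>2)
        * (\<integral>\<^sup>+l. ennreal ((W l * (2 * (1 + \<bar>l\<bar>) powr (\<alpha> - 1)))\<^sup>2) \<partial>lborel)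
      + ennreal (2 * c\<^sup>2 * 2\<^sup>2 * (\<integral>x. (weighted_lorentzian \<alpha> x)\<^sup>2 \<partial>lborel))
          * (\<integral>\<^sup>+l. ennreal (W l / (1 + \<bar>l - a\<bar>)) \<partial>lborel)\<^sup>2"
    by (rule nn_integral_weighted_square_le_of_majorant[OF _ _ _ _ _ weighted_lorentzian_nonneg _ _ _ _
        integrable_weighted_lorentzian integrable_weighted_lorentzian_square major
        low_frequency_weight_le low_frequency_weight_diagonal_le])
      (use assms in auto)
  moreover have "((1 + \<bar>\<mu>\<bar>) powr \<alpha> * Fc \<mu>)\<^sup>2 = (1 + \<bar>\<mu>\<bar>) powr (2*\<alpha>) * (Fc \<mu>)\<^sup>2" for \<mu>
    by (simp add: power_mult_distrib powr_square)
  moreover have "ennreal ((W l * (2 * (1 + \<bar>l\<bar>) powr (\<alpha> - 1)))\<^sup>2) = 4 * ennreal ((W l)\<^sup>2 / (1 + \<bar>l\<bar>) powr (2*(1-\<alpha>)))" for l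
  proof -
    have "(1 + \<bar>l\<bar>) powr (2 * (\<alpha> - 1)) = 1 / (1 + \<bar>l\<bar>) powr (2*(1-\<alpha>))"
      by (simp add: powr_minus_divide[symmetric] algebra_simps)
    then have "(W l * (2 * (1 + \<bar>l\<bar>) powr (\<alpha> - 1)))\<^sup>2 = 4 * ((W l)\<^sup>2 / (1 + \<bar>l\<bar>) powr (2*(1-\<alpha>)))"
      by (simp add: power_mult_distrib powr_square)
    then show ?thesis by (simp only:) (subst ennreal_mult', simp_all)
  qed
  moreover have "ennreal (2 * c\<^sup>2 * (\<integral>x. weighted_lorentzian \<alpha> x \<partial>lborel)\<^sup>2) * 4
      = ennreal (8 * c\<^sup>2 * (\<integral>x. weighted_lorentzian \<alpha> x \<partial>lborel)\<^sup>2)"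
    using ennreal_mult''[of 4 "2 * c\<^sup>2 * (\<integral>x. weighted_lorentzian \<alpha> x \<partial>lborel)\<^sup>2"] by (simp add: mult_ac)
  ultimately show ?thesis by (simp add: nn_integral_cmult mult.assoc[symmetric])
qed

section \<open>The \<open>X\<^sub>b\<close> and \<open>Y\<^sub>b\<close> norms\<close>

lemma enn_sqrt_mono: "x \<le> y \<Longrightarrow> enn_sqrt x \<le> enn_sqrt y"
  by (cases x; cases y) (auto simp: enn_sqrt_def ennreal_le_iff top_unique)

lemma enn_sqrt_add_le: "enn_sqrt (x + y) \<le> enn_sqrt x + enn_sqrt y"
proof (cases x; cases y)
  fix r s assume "x = ennreal r" "0 \<le> r" "y = ennreal s" "0 \<le> s"
  then show ?thesis
    using sqrt_add_le_add_sqrt[of r s] by (simp add: enn_sqrt_def ennreal_plus[symmetric] del: ennreal_plus)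
qed (auto simp: enn_sqrt_def)

lemma enn_sqrt_ennreal_mult:
  assumes "0 \<le> a" shows "enn_sqrt (ennreal a * x) = ennreal (sqrt a) * enn_sqrt x"
proof (cases x)
  case (real r)
  then show ?thesis using assms by (simp add: enn_sqrt_def ennreal_mult[symmetric] real_sqrt_mult)
next
  case top
  then show ?thesis using assms by (cases "a = 0") (auto simp: enn_sqrt_def ennreal_mult_top)
qed

lemma enn_sqrt_le_of_square_le:
  fixes J1 J2 I1 I2 I3 :: ennreal and A1 B1 A2 B2 :: real
  assumes "J1 \<le> ennreal A1 * I1 + ennreal B1 * I3" "J2 \<le> ennreal A2 * I2 + ennreal B2 * I3"
    and "0 \<le> A1" "0 \<le> B1" "0 \<le> A2" "0 \<le> B2"
  shows "enn_sqrt J1 + enn_sqrt J2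
    \<le> ennreal (sqrt A1 + sqrt B1 + sqrt A2 + sqrt B2) * (enn_sqrt I1 + enn_sqrt I2 + enn_sqrt I3)"
proof -
  define C where "C = sqrt A1 + sqrt B1 + sqrt A2 + sqrt B2"
  have "enn_sqrt J1 + enn_sqrt J2
      \<le> enn_sqrt (ennreal A1 * I1 + ennreal B1 * I3) + enn_sqrt (ennreal A2 * I2 + ennreal B2 * I3)"
    using assms by (intro add_mono enn_sqrt_mono)
  also have "\<dots> \<le> (ennreal (sqrt A1) * enn_sqrt I1 + ennreal (sqrt B1) * enn_sqrt I3)
      + (ennreal (sqrt A2) * enn_sqrt I2 + ennreal (sqrt B2) * enn_sqrt I3)"
    using assms by (intro add_mono order_trans[OF enn_sqrt_add_le]) (simp_all add: enn_sqrt_ennreal_mult)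
  also have "\<dots> = ennreal (sqrt A1) * enn_sqrt I1 + ennreal (sqrt A2) * enn_sqrt I2
      + (ennreal (sqrt B1) + ennreal (sqrt B2)) * enn_sqrt I3"
    by (simp add: algebra_simps)
  also have "\<dots> \<le> ennreal C * enn_sqrt I1 + ennreal C * enn_sqrt I2 + ennreal C * enn_sqrt I3"
    unfolding C_def using assms
    by (intro add_mono mult_right_mono ennreal_leI) (simp_all flip: ennreal_plus)
  also have "\<dots> = ennreal C * (enn_sqrt I1 + enn_sqrt I2 + enn_sqrt I3)"
    by (simp add: algebra_simps)
  finally show ?thesis unfolding C_def .
qed

lemma AE_modulation_L1_finite:
  assumes [measurable]: "case_prod wh \<in> borel_measurable (lborel \<Otimes>\<^sub>M lborel)"
    and "Yb_norm \<alpha> b wh < \<infinity>"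
  shows "AE \<xi> in lborel. modulation_L1 wh \<xi> < \<infinity>"
proof -
  have "enn_sqrt (\<integral>\<^sup>+\<xi>. (modulation_L1 wh \<xi>)\<^sup>2 \<partial>lborel) < \<infinity>"
    using assms(2) unfolding Yb_norm_def modulation_L1_def by (simp add: top.not_eq_extremum[symmetric])
  then have "(\<integral>\<^sup>+\<xi>. (modulation_L1 wh \<xi>)\<^sup>2 \<partial>lborel) \<noteq> \<infinity>"
    by (auto simp: enn_sqrt_def)
  then have "AE \<xi> in lborel. (modulation_L1 wh \<xi>)\<^sup>2 \<noteq> \<infinity>"
    by (intro nn_integral_PInf_AE) (auto simp: modulation_L1_def)
  then show ?thesis
    by eventually_elim (auto simp: top.not_eq_extremum[symmetric] power_eq_top_ennreal)
qed

lemma nn_integral_le_lincomb_AE: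
  assumes "AE x in M. f x \<le> ennreal A * g x + ennreal B * k x"
    and [measurable]: "g \<in> borel_measurable M" "k \<in> borel_measurable M"
  shows "(\<integral>\<^sup>+x. f x \<partial>M) \<le> ennreal A * (\<integral>\<^sup>+x. g x \<partial>M) + ennreal B * (\<integral>\<^sup>+x. k x \<partial>M)"
proof -
  have "(\<integral>\<^sup>+x. f x \<partial>M) \<le> (\<integral>\<^sup>+x. ennreal A * g x + ennreal B * k x \<partial>M)"
    by (rule nn_integral_mono_AE[OF assms(1)])
  also have "\<dots> = ennreal A * (\<integral>\<^sup>+x. g x \<partial>M) + ennreal B * (\<integral>\<^sup>+x. k x \<partial>M)"
    by (simp add: nn_integral_add nn_integral_cmult)
  finally show ?thesis .
qed

lemma Xb_modulation_part_le:
  fixes Fh wh :: "real \<Rightarrow> real \<Rightarrow> complex"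
  assumes [measurable]: "case_prod wh \<in> borel_measurable (lborel \<Otimes>\<^sub>M lborel)"
    and "0 < b" "b \<le> 1/2" "0 \<le> c"
    and finite: "AE \<xi> in lborel. modulation_L1 wh \<xi> < \<infinity>"
    and major: "\<And>\<xi> \<mu>. wh \<xi> \<in> borel_measurable borel \<Longrightarrow> modulation_L1 wh \<xi> < \<infinity> \<Longrightarrow>
      ennreal (cmod (Fh \<xi> \<mu>)) \<le> ennreal c * duhamel_majorant (\<xi>^3) (\<lambda>l. cmod (wh \<xi> l)) \<mu>"
  shows "(\<integral>\<^sup>+\<xi>. \<integral>\<^sup>+lam. ennreal ((1 + \<bar>lam - \<xi>^3\<bar>) powr (2*b) * (cmod (Fh \<xi> lam))\<^sup>2) \<partial>lborel \<partial>lborel)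
    \<le> ennreal (2 * c\<^sup>2 * (\<integral>x. weighted_lorentzian b x \<partial>lborel)\<^sup>2)
        * (\<integral>\<^sup>+\<xi>. \<integral>\<^sup>+lam. ennreal ((cmod (wh \<xi> lam))\<^sup>2 / (1 + \<bar>lam - \<xi>^3\<bar>) powr (2*b)) \<partial>lborel \<partial>lborel)
      + ennreal (2 * c\<^sup>2 * (\<integral>x. (weighted_lorentzian b x)\<^sup>2 \<partial>lborel)) * (\<integral>\<^sup>+\<xi>. (modulation_L1 wh \<xi>)\<^sup>2 \<partial>lborel)"
proof (rule nn_integral_le_lincomb_AE)
  have slice[measurable]: "wh \<xi> \<in> borel_measurable borel" for \<xi>
    using measurable_Pair2[OF assms(1), of \<xi>] by simp
  show "AE \<xi> in lborel. (\<integral>\<^sup>+lam. ennreal ((1 + \<bar>lam - \<xi>^3\<bar>) powr (2*b) * (cmod (Fh \<xi> lam))\<^sup>2) \<partial>lborel)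
      \<le> ennreal (2 * c\<^sup>2 * (\<integral>x. weighted_lorentzian b x \<partial>lborel)\<^sup>2)
          * (\<integral>\<^sup>+lam. ennreal ((cmod (wh \<xi> lam))\<^sup>2 / (1 + \<bar>lam - \<xi>^3\<bar>) powr (2*b)) \<partial>lborel)
        + ennreal (2 * c\<^sup>2 * (\<integral>x. (weighted_lorentzian b x)\<^sup>2 \<partial>lborel)) * (modulation_L1 wh \<xi>)\<^sup>2"
    using finite
  proof eventually_elim
    case (elim \<xi>)
    show ?case unfolding modulation_L1_def
      by (rule modulation_weighted_square_le[OF _ _ _ assms(2-4) major[OF slice elim]]) auto
  qed
qed (auto simp: modulation_L1_def)

lemma Xb_low_frequency_part_le:
  fixes Fh wh :: "real \<Rightarrow> real \<Rightarrow> complex"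
  assumes [measurable]: "case_prod wh \<in> borel_measurable (lborel \<Otimes>\<^sub>M lborel)"
    and "0 < \<alpha>" "\<alpha> < 1" "0 \<le> c"
    and finite: "AE \<xi> in lborel. modulation_L1 wh \<xi> < \<infinity>"
    and major: "\<And>\<xi> \<mu>. wh \<xi> \<in> borel_measurable borel \<Longrightarrow> modulation_L1 wh \<xi> < \<infinity> \<Longrightarrow>
      ennreal (cmod (Fh \<xi> \<mu>)) \<le> ennreal c * duhamel_majorant (\<xi>^3) (\<lambda>l. cmod (wh \<xi> l)) \<mu>"
  shows "(\<integral>\<^sup>+\<xi>. indicator {-1<..<1} \<xi> * (\<integral>\<^sup>+lam. ennreal ((1 + \<bar>lam\<bar>) powr (2*\<alpha>) * (cmod (Fh \<xi> lam))\<^sup>2) \<partial>lborel) \<partial>lborel)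
    \<le> ennreal (8 * c\<^sup>2 * (\<integral>x. weighted_lorentzian \<alpha> x \<partial>lborel)\<^sup>2)
        * (\<integral>\<^sup>+\<xi>. indicator {-1<..<1} \<xi> * (\<integral>\<^sup>+lam. ennreal ((cmod (wh \<xi> lam))\<^sup>2 / (1 + \<bar>lam\<bar>) powr (2*(1-\<alpha>))) \<partial>lborel) \<partial>lborel)
      + ennreal (8 * c\<^sup>2 * (\<integral>x. (weighted_lorentzian \<alpha> x)\<^sup>2 \<partial>lborel)) * (\<integral>\<^sup>+\<xi>. (modulation_L1 wh \<xi>)\<^sup>2 \<partial>lborel)"
proof (rule nn_integral_le_lincomb_AE)
  have slice[measurable]: "wh \<xi> \<in> borel_measurable borel" for \<xi>
    using measurable_Pair2[OF assms(1), of \<xi>] by simp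
  show "AE \<xi> in lborel. indicator {-1<..<1} \<xi> * (\<integral>\<^sup>+lam. ennreal ((1 + \<bar>lam\<bar>) powr (2*\<alpha>) * (cmod (Fh \<xi> lam))\<^sup>2) \<partial>lborel)
      \<le> ennreal (8 * c\<^sup>2 * (\<integral>x. weighted_lorentzian \<alpha> x \<partial>lborel)\<^sup>2)
          * (indicator {-1<..<1} \<xi> * (\<integral>\<^sup>+lam. ennreal ((cmod (wh \<xi> lam))\<^sup>2 / (1 + \<bar>lam\<bar>) powr (2*(1-\<alpha>))) \<partial>lborel))
        + ennreal (8 * c\<^sup>2 * (\<integral>x. (weighted_lorentzian \<alpha> x)\<^sup>2 \<partial>lborel)) * (modulation_L1 wh \<xi>)\<^sup>2"
    using finite
  proof eventually_elim
    case (elim \<xi>)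
    show ?case
    proof (cases "\<xi> \<in> {-1<..<1}")
      case True
      then have "\<bar>\<xi>\<bar> ^ 3 < 1" by (simp add: power_less_one_iff abs_less_iff)
      then have "\<bar>\<xi>^3\<bar> < 1" by (simp add: power_abs)
      have "(\<integral>\<^sup>+lam. ennreal ((1 + \<bar>lam\<bar>) powr (2*\<alpha>) * (cmod (Fh \<xi> lam))\<^sup>2) \<partial>lborel)
          \<le> ennreal (8 * c\<^sup>2 * (\<integral>x. weighted_lorentzian \<alpha> x \<partial>lborel)\<^sup>2)
              * (\<integral>\<^sup>+lam. ennreal ((cmod (wh \<xi> lam))\<^sup>2 / (1 + \<bar>lam\<bar>) powr (2*(1-\<alpha>))) \<partial>lborel)
            + ennreal (8 * c\<^sup>2 * (\<integral>x. (weighted_lorentzian \<alpha> x)\<^sup>2 \<partial>lborel)) * (modulation_L1 wh \<xi>)\<^sup>2"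
        unfolding modulation_L1_def
        by (rule low_frequency_weighted_square_le[OF _ _ _ assms(2,3) \<open>\<bar>\<xi>^3\<bar> < 1\<close> assms(4) major[OF slice elim]]) auto
      then show ?thesis using True by simp
    qed simp
  qed
qed (auto simp: modulation_L1_def)

definition Xb_Yb_constant :: "real \<Rightarrow> real \<Rightarrow> real \<Rightarrow> real" where
  "Xb_Yb_constant \<alpha> b c =
     sqrt (2 * c\<^sup>2 * (\<integral>x. weighted_lorentzian b x \<partial>lborel)\<^sup>2) + sqrt (2 * c\<^sup>2 * (\<integral>x. (weighted_lorentzian b x)\<^sup>2 \<partial>lborel))
     + sqrt (8 * c\<^sup>2 * (\<integral>x. weighted_lorentzian \<alpha> x \<partial>lborel)\<^sup>2) + sqrt (8 * c\<^sup>2 * (\<integral>x. (weighted_lorentzian \<alpha> x)\<^sup>2 \<partial>lborel))"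

lemma Xb_Yb_constant_nonneg: "0 \<le> Xb_Yb_constant \<alpha> b c"
  unfolding Xb_Yb_constant_def by (simp add: integral_nonneg_AE)

lemma Xb_norm_le_of_majorant:
  fixes Fh wh :: "real \<Rightarrow> real \<Rightarrow> complex"
  assumes measurable: "case_prod wh \<in> borel_measurable (lborel \<Otimes>\<^sub>M lborel)" and "Yb_norm \<alpha> b wh < \<infinity>"
    and "0 < b" "b \<le> 1/2" "0 < \<alpha>" "\<alpha> < 1" "0 \<le> c"
    and major: "\<And>\<xi> \<mu>. wh \<xi> \<in> borel_measurable borel \<Longrightarrow> modulation_L1 wh \<xi> < \<infinity> \<Longrightarrow>
      ennreal (cmod (Fh \<xi> \<mu>)) \<le> ennreal c * duhamel_majorant (\<xi>^3) (\<lambda>l. cmod (wh \<xi> l)) \<mu>"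
  shows "Xb_norm \<alpha> b Fh \<le> ennreal (Xb_Yb_constant \<alpha> b c) * Yb_norm \<alpha> b wh"
proof -
  note finite = AE_modulation_L1_finite[OF measurable \<open>Yb_norm \<alpha> b wh < \<infinity>\<close>]
  from Xb_modulation_part_le[OF measurable assms(3,4,7) finite major]
    Xb_low_frequency_part_le[OF measurable assms(5,6,7) finite major]
  show ?thesis
    unfolding Xb_norm_def Yb_norm_def Xb_Yb_constant_def modulation_L1_def
    by (rule enn_sqrt_le_of_square_le) (simp_all add: integral_nonneg_AE)
qed

theorem lemma5p4:
  fixes \<alpha> b :: real and \<theta> :: "real \<Rightarrow> real"
  assumes "1/2 < \<alpha>" "\<alpha> < 2/3" "0 < b" "b < 1/2"
    and "C0_infty \<theta>"
  shows "\<exists>C::real. C \<ge> 0 \<and>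
    (\<forall>wh :: real \<Rightarrow> real \<Rightarrow> complex.
       case_prod wh \<in> borel_measurable borel \<longrightarrow> Yb_norm \<alpha> b wh < \<infinity> \<longrightarrow>
       Xb_norm \<alpha> b (cutoff_duhamel_hat \<theta> wh) \<le> ennreal C * Yb_norm \<alpha> b wh)"
proof -
  obtain c where "0 \<le> c" and major: "\<And>wh \<xi> \<mu>. wh \<xi> \<in> borel_measurable borel \<Longrightarrow> modulation_L1 wh \<xi> < \<infinity> \<Longrightarrow>
      ennreal (cmod (cutoff_duhamel_hat \<theta> wh \<xi> \<mu>)) \<le> ennreal c * duhamel_majorant (\<xi>^3) (\<lambda>l. cmod (wh \<xi> l)) \<mu>"
    using cutoff_duhamel_hat_le_majorant[OF assms(5)] by blast
  show ?thesis
  proof (intro exI[of _ "Xb_Yb_constant \<alpha> b c"] conjI allI impI Xb_Yb_constant_nonneg)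
    fix wh :: "real \<Rightarrow> real \<Rightarrow> complex"
    assume "case_prod wh \<in> borel_measurable borel" and "Yb_norm \<alpha> b wh < \<infinity>"
    then show "Xb_norm \<alpha> b (cutoff_duhamel_hat \<theta> wh) \<le> ennreal (Xb_Yb_constant \<alpha> b c) * Yb_norm \<alpha> b wh"
      using assms(1-4) \<open>0 \<le> c\<close> by (intro Xb_norm_le_of_majorant major) (auto simp: lborel_prod)
  qed
qed

end
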